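(* Let $k$ be a field of characteristic $0$. Let $p\geq 2$ and let $n_0<n_1<\cdots<n_p$ be positive integers with $n_i=n_0+id$ for $i\in[1,p]$ and a fixed positive integer $d$, such that $\gcd(n_0,\dots,n_p)=1$ and $\{n_0,\dots,n_p\}$ minimally generates the numerical semigroup $\langle n_0,\dots,n_p\rangle$. Let $S=\langle (0,n_p),(n_0,n_p-n_0),(n_1,n_p-n_1),\dots,(n_{p-1},n_p-n_{p-1}),(n_p,0)\rangle\subseteq\mathbb{N}^2$, and write $n_0=ap+b$ with integers $a\ge0$, $0\leq b<p$. Then: \begin{enumerate} \item If $b=0$, $\mathrm{Der}_k(k[S])$ is minimally generated by $\left\{u\frac{\partial}{\partial u},\ t^{an_p+d}u^{(d-1)(n_p-1)}\frac{\partial}{\partial u},\ t\frac{\partial}{\partial t},\ t^{an_p-n_{p-i}+1}u^{d(n_p-i)}\frac{\partial}{\partial t}\ (1\leq i\leq p-1)\right\}$. \item If $b=1$, $\mathrm{Der}_k(k[S])$ is minimally generated by $\left\{u\frac{\partial}{\partial u},\ t^{an_p+d}u^{(d-1)(n_p-1)}\frac{\partial}{\partial u},\ t\frac{\partial}{\partial t},\ t^{an_p-n_{p-i}+1}u^{d(n_p-i)}\frac{\partial}{\partial t}\ (1\leq i\leq p)\right\}$. \item If $b\neq 0,1$, $\mathrm{Der}_k(k[S])$ is minimally generated by $\left\{u\frac{\partial}{\partial u},\ t^{(a+1)n_p+d}u^{(d-1)(n_p-1)}\frac{\partial}{\partial u},\ t\frac{\partial}{\partial t},\ t^{an_p+id+1}u^{d(n_p-i)}\frac{\partial}{\partial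 t}\ (1\leq i\leq b-1)\right\}$. \end{enumerate}
   Context: $k[S]=\bigoplus_{(s_1,s_2)\in S}k\,t^{s_1}u^{s_2}\subseteq k[t,u]$ is the semigroup ring of $S$ (first coordinate = exponent of $t$, second = exponent of $u$). $\mathrm{Der}_k(k[S])$ is the $k[S]$-module of $k$-derivations of $k[S]$; each extends uniquely to $k(t,u)$ and is written $f\frac{\partial}{\partial t}+g\frac{\partial}{\partial u}$. "Minimally generated" refers to a minimal generating set as a $k[S]$-module. *)

theory Defs
  imports Main "HOL-Library.Poly_Mapping" "HOL-Library.Product_Plus"
begin

text \<open>Polynomials in two variables t, u over k: finitely supported functions
  from exponent pairs (exponent of t, exponent of u) to k, with convolution product.\<close>
type_synonym 'k pol2 = "(nat \<times> nat) \<Rightarrow>\<^sub>0 'k"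

inductive_set sgrp_gen :: "'a::monoid_add set \<Rightarrow> 'a set" for G where
  zero: "0 \<in> sgrp_gen G"
| gen: "g \<in> G \<Longrightarrow> g \<in> sgrp_gen G"
| add: "x \<in> sgrp_gen G \<Longrightarrow> y \<in> sgrp_gen G \<Longrightarrow> x + y \<in> sgrp_gen G"

definition semigroup_ring :: "(nat \<times> nat) set \<Rightarrow> 'k::field pol2 set" where
  "semigroup_ring S = {f. Poly_Mapping.keys f \<subseteq> S}"

definition mon :: "nat \<Rightarrow> nat \<Rightarrow> 'k::field pol2" where
  "mon a b = Poly_Mapping.single (a, b) 1"

definition const :: "'k::field \<Rightarrow> 'k pol2" where
  "const c = Poly_Mapping.single (0, 0) c"

definition partial_t :: "'k::field pol2 \<Rightarrow> 'k pol2" where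
  "partial_t f = (\<Sum>m\<in>Poly_Mapping.keys f. Poly_Mapping.single (fst m - 1, snd m) (of_nat (fst m) * Poly_Mapping.lookup f m))"

definition partial_u :: "'k::field pol2 \<Rightarrow> 'k pol2" where
  "partial_u f = (\<Sum>m\<in>Poly_Mapping.keys f. Poly_Mapping.single (fst m, snd m - 1) (of_nat (snd m) * Poly_Mapping.lookup f m))"

definition vf_t :: "nat \<Rightarrow> nat \<Rightarrow> 'k::field pol2 \<Rightarrow> 'k pol2" where
  "vf_t a b f = mon a b * partial_t f"

definition vf_u :: "nat \<Rightarrow> nat \<Rightarrow> 'k::field pol2 \<Rightarrow> 'k pol2" where
  "vf_u a b f = mon a b * partial_u f"

text \<open>Der_k(k[S]): k-linear derivations of k[S] (maps considered on k[S] only).\<close>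
definition Der :: "(nat \<times> nat) set \<Rightarrow> ('k::field pol2 \<Rightarrow> 'k pol2) set" where
  "Der S = {D. (\<forall>x\<in>semigroup_ring S. D x \<in> semigroup_ring S)
     \<and> (\<forall>x\<in>semigroup_ring S. \<forall>y\<in>semigroup_ring S.
          D (x + y) = D x + D y \<and> D (x * y) = x * D y + y * D x)
     \<and> (\<forall>c. \<forall>x\<in>semigroup_ring S. D (const c * x) = const c * D x)}"

definition generates_Der :: "(nat \<times> nat) set \<Rightarrow> ('k::field pol2 \<Rightarrow> 'k pol2) set \<Rightarrow> bool" where
  "generates_Der S G \<longleftrightarrow> (\<forall>D\<in>Der S. \<exists>r. (\<forall>g\<in>G. r g \<in> semigroup_ring S) \<and>
       (\<forall>x\<in>semigroup_ring S. D x = (\<Sum>g\<in>G. r g * g x)))"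

definition minimally_generates_Der :: "(nat \<times> nat) set \<Rightarrow> ('k::field pol2 \<Rightarrow> 'k pol2) set \<Rightarrow> bool" where
  "minimally_generates_Der S G \<longleftrightarrow> finite G \<and> G \<subseteq> Der S \<and> generates_Der S G
     \<and> (\<forall>H. H \<subset> G \<longrightarrow> \<not> generates_Der S H)"

end

theory Submission
  imports Defs
begin

text \<open>\<open>Der\<^sub>k(k[S])\<close> is \<open>\<int>\<^sup>2\<close>-graded.  The coefficient of \<open>X\<^sup>s\<^sup>+\<^sup>w\<close> in \<open>D X\<^sup>s\<close> is additive in
  \<open>s \<in> S\<close> by the Leibniz rule, so in characteristic \<open>0\<close> the degree-\<open>w\<close> part of \<open>D\<close> is
  \<open>X\<^sup>w (\<alpha> t \<partial>/\<partial>t + \<beta> u \<partial>/\<partial>u)\<close>.  For the semigroups at hand every \<open>w\<close> with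
  \<open>w + (N, 0), w + (0, N) \<in> S\<close> is both \<open>t\<close>- and \<open>u\<close>-admissible, so \<open>Der\<^sub>k(k[S])\<close> splits into the
  \<open>S\<close>-modules of \<open>t\<close>-admissible and of \<open>u\<close>-admissible degrees, and the monomial fields
  belonging to their minimal elements form a minimal generating set.

  For \<open>S\<close> generated by \<open>(0, N)\<close> and \<open>(n\<^sub>i, N - n\<^sub>i)\<close>, \<open>n\<^sub>i = n\<^sub>0 + i d\<close>, \<open>N = n\<^sub>p\<close>, a point of
  level \<open>k\<close> (total degree \<open>k N\<close>) has first coordinate \<open>i n\<^sub>0 + l d\<close> with \<open>i \<le> k\<close> and
  \<open>l \<le> i p\<close>, and since \<open>gcd(n\<^sub>0, d) = 1\<close> such a representation is unique up to
  \<open>(i, l) \<mapsto> (i + d, l - n\<^sub>0)\<close>.  Choosing the representation with least \<open>i\<close> shows that the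
  admissible degrees outside \<open>S\<close> all come from level \<open>j\<^sub>0 + d\<close>, where \<open>j\<^sub>0 = \<lceil>(n\<^sub>0 - 1) / p\<rceil>\<close>:
  for \<open>\<partial>/\<partial>t\<close> they are \<open>((j\<^sub>0 + d) n\<^sub>0 + l d - N, \<dots>)\<close> with \<open>j\<^sub>0 p < l + n\<^sub>0\<close>, \<open>l < p\<close>, and
  for \<open>\<partial>/\<partial>u\<close> a single chain starting at \<open>(j\<^sub>0 N + d, (d - 1) N - d)\<close>.  Writing
  \<open>n\<^sub>0 = a p + b\<close> gives \<open>j\<^sub>0 = a\<close> for \<open>b \<le> 1\<close> and \<open>j\<^sub>0 = a + 1\<close> otherwise.\<close>

section \<open>Partial derivatives on \<open>k[t, u]\<close>\<close>

abbreviation X :: "nat \<times> nat \<Rightarrow> 'k::field pol2" where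
  "X s \<equiv> Poly_Mapping.single s 1"

lemma poly_mapping_sum_single:
  "f = (\<Sum>k\<in>Poly_Mapping.keys f. Poly_Mapping.single k (Poly_Mapping.lookup f k))"
proof (rule poly_mapping_eqI)
  fix v
  show "Poly_Mapping.lookup f v =
      Poly_Mapping.lookup (\<Sum>k\<in>Poly_Mapping.keys f. Poly_Mapping.single k (Poly_Mapping.lookup f k)) v"
    by (cases "v \<in> Poly_Mapping.keys f") (auto simp: lookup_sum lookup_single when_def in_keys_iff)
qed

lemma pol2_sum_const_X:
  "f = (\<Sum>s\<in>Poly_Mapping.keys f. const (Poly_Mapping.lookup f s) * (X s :: 'k::field pol2))"
  by (simp add: const_def mult_single zero_prod_def[symmetric] poly_mapping_sum_single[of f, symmetric])

lemma lookup_single_times: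
  fixes F :: "'k::field pol2"
  shows "Poly_Mapping.lookup (Poly_Mapping.single q c * F) v =
    (if fst q \<le> fst v \<and> snd q \<le> snd v then c * Poly_Mapping.lookup F (fst v - fst q, snd v - snd q) else 0)"
proof -
  have "Poly_Mapping.single q c * F =
      (\<Sum>k\<in>Poly_Mapping.keys F. Poly_Mapping.single (q + k) (c * Poly_Mapping.lookup F k))"
    by (subst poly_mapping_sum_single[of F]) (simp add: sum_distrib_left mult_single)
  hence "Poly_Mapping.lookup (Poly_Mapping.single q c * F) v = (\<Sum>k\<in>Poly_Mapping.keys F.
      if k = (fst v - fst q, snd v - snd q) \<and> fst q \<le> fst v \<and> snd q \<le> snd v
      then c * Poly_Mapping.lookup F k else 0)"
    by (auto simp: lookup_sum lookup_single when_def prod_eq_iff intro!: sum.cong)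
  thus ?thesis
    by (cases "(fst v - fst q, snd v - snd q) \<in> Poly_Mapping.keys F") (auto simp: in_keys_iff)
qed

lemma lookup_partial_t:
  "Poly_Mapping.lookup (partial_t f) (a, b) = of_nat (a + 1) * Poly_Mapping.lookup f (a + 1, b)"
proof -
  have "Poly_Mapping.lookup (partial_t f) (a, b) = (\<Sum>m\<in>Poly_Mapping.keys f.
      if m = (a + 1, b) then of_nat (a + 1) * Poly_Mapping.lookup f (a + 1, b) else 0)"
    unfolding partial_t_def lookup_sum
    by (rule sum.cong) (auto simp: lookup_single when_def split: nat_diff_split)
  thus ?thesis by (cases "(a + 1, b) \<in> Poly_Mapping.keys f") (auto simp: in_keys_iff)
qed

lemma lookup_partial_u:
  "Poly_Mapping.lookup (partial_u f) (a, b) = of_nat (b + 1) * Poly_Mapping.lookup f (a, b + 1)"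
proof -
  have "Poly_Mapping.lookup (partial_u f) (a, b) = (\<Sum>m\<in>Poly_Mapping.keys f.
      if m = (a, b + 1) then of_nat (b + 1) * Poly_Mapping.lookup f (a, b + 1) else 0)"
    unfolding partial_u_def lookup_sum
    by (rule sum.cong) (auto simp: lookup_single when_def split: nat_diff_split)
  thus ?thesis by (cases "(a, b + 1) \<in> Poly_Mapping.keys f") (auto simp: in_keys_iff)
qed

lemma partial_t_add: "partial_t (f + g) = partial_t f + partial_t g"
  by (rule poly_mapping_eqI) (auto simp: lookup_partial_t lookup_add algebra_simps)

lemma partial_u_add: "partial_u (f + g) = partial_u f + partial_u g"
  by (rule poly_mapping_eqI) (auto simp: lookup_partial_u lookup_add algebra_simps)

lemma partial_t_single:
  "partial_t (Poly_Mapping.single s c) = Poly_Mapping.single (fst s - 1, snd s) (of_nat (fst s) * c)"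
proof (rule poly_mapping_eqI)
  fix v :: "nat \<times> nat"
  show "Poly_Mapping.lookup (partial_t (Poly_Mapping.single s c)) v =
      Poly_Mapping.lookup (Poly_Mapping.single (fst s - 1, snd s) (of_nat (fst s) * c)) v"
    by (cases v, cases s, rename_tac x y a b, case_tac a)
      (auto simp: lookup_partial_t lookup_single when_def)
qed

lemma partial_u_single:
  "partial_u (Poly_Mapping.single s c) = Poly_Mapping.single (fst s, snd s - 1) (of_nat (snd s) * c)"
proof (rule poly_mapping_eqI)
  fix v :: "nat \<times> nat"
  show "Poly_Mapping.lookup (partial_u (Poly_Mapping.single s c)) v =
      Poly_Mapping.lookup (Poly_Mapping.single (fst s, snd s - 1) (of_nat (snd s) * c)) v"
    by (cases v, cases s, rename_tac x y a b, case_tac b)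
      (auto simp: lookup_partial_u lookup_single when_def)
qed

lemma leibniz_rule_from_monomials:
  fixes \<delta> :: "'k::field pol2 \<Rightarrow> 'k pol2"
  assumes add: "\<And>f g. \<delta> (f + g) = \<delta> f + \<delta> g"
    and monomials: "\<And>k l c e. \<delta> (Poly_Mapping.single k c * Poly_Mapping.single l e) =
      Poly_Mapping.single k c * \<delta> (Poly_Mapping.single l e) + Poly_Mapping.single l e * \<delta> (Poly_Mapping.single k c)"
  shows "\<delta> (f * g) = f * \<delta> g + g * \<delta> f"
proof -
  have sum: "\<delta> (\<Sum>k\<in>K. P k) = (\<Sum>k\<in>K. \<delta> (P k))" for K :: "(nat \<times> nat) set" and P :: "_ \<Rightarrow> 'k pol2"
  proof -
    have "\<delta> 0 = 0" using add[of 0 0] by simp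
    thus ?thesis by (induction K rule: infinite_finite_induct) (auto simp: add)
  qed
  define sf where "sf k = Poly_Mapping.single k (Poly_Mapping.lookup f k)" for k
  define sg where "sg k = Poly_Mapping.single k (Poly_Mapping.lookup g k)" for k
  let ?A = "Poly_Mapping.keys f" and ?B = "Poly_Mapping.keys g"
  have f: "f = (\<Sum>k\<in>?A. sf k)" and g: "g = (\<Sum>k\<in>?B. sg k)"
    unfolding sf_def sg_def by (rule poly_mapping_sum_single)+
  have "\<delta> (f * g) = \<delta> (\<Sum>k\<in>?A. \<Sum>k'\<in>?B. sf k * sg k')"
    by (subst f, subst g) (simp add: sum_product)
  also have "\<dots> = (\<Sum>k\<in>?A. \<Sum>k'\<in>?B. sf k * \<delta> (sg k') + sg k' * \<delta> (sf k))"
    by (simp add: sum sf_def sg_def monomials)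
  also have "\<dots> = (\<Sum>k\<in>?A. sf k) * \<delta> (\<Sum>k'\<in>?B. sg k') + (\<Sum>k'\<in>?B. sg k') * \<delta> (\<Sum>k\<in>?A. sf k)"
    by (simp add: sum sum.distrib sum_distrib_left sum_distrib_right sum.swap[of _ ?A ?B])
  finally show ?thesis unfolding f[symmetric] g[symmetric] .
qed

lemma partial_t_mult: "partial_t (f * g) = f * partial_t g + g * (partial_t f :: 'k::field pol2)"
proof (rule leibniz_rule_from_monomials[where \<delta> = partial_t, OF partial_t_add])
  fix k l :: "nat \<times> nat" and c e :: 'k
  show "partial_t (Poly_Mapping.single k c * Poly_Mapping.single l e) =
      Poly_Mapping.single k c * partial_t (Poly_Mapping.single l e) +
      Poly_Mapping.single l e * partial_t (Poly_Mapping.single k c)"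
    by (cases k, cases l, rename_tac a b a' b', case_tac a; case_tac a')
      (simp_all add: mult_single partial_t_single single_add[symmetric] algebra_simps)
qed

lemma partial_u_mult: "partial_u (f * g) = f * partial_u g + g * (partial_u f :: 'k::field pol2)"
proof (rule leibniz_rule_from_monomials[where \<delta> = partial_u, OF partial_u_add])
  fix k l :: "nat \<times> nat" and c e :: 'k
  show "partial_u (Poly_Mapping.single k c * Poly_Mapping.single l e) =
      Poly_Mapping.single k c * partial_u (Poly_Mapping.single l e) +
      Poly_Mapping.single l e * partial_u (Poly_Mapping.single k c)"
    by (cases k, cases l, rename_tac a b a' b', case_tac b; case_tac b')
      (simp_all add: mult_single partial_u_single single_add[symmetric] algebra_simps)
qed

lemma partial_t_const [simp]: "partial_t (const c) = 0"
  by (simp add: const_def partial_t_single)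

lemma partial_u_const [simp]: "partial_u (const c) = 0"
  by (simp add: const_def partial_u_single)

lemma vf_t_single:
  "vf_t a b (Poly_Mapping.single s c :: 'k::field pol2) =
    Poly_Mapping.single (a + (fst s - 1), b + snd s) (of_nat (fst s) * c)"
  by (simp add: vf_t_def mon_def partial_t_single mult_single)

lemma vf_u_single:
  "vf_u a b (Poly_Mapping.single s c :: 'k::field pol2) =
    Poly_Mapping.single (a + fst s, b + (snd s - 1)) (of_nat (snd s) * c)"
  by (simp add: vf_u_def mon_def partial_u_single mult_single)

lemma vf_t_add: "vf_t a b (x + y) = vf_t a b x + vf_t a b y"
  by (simp add: vf_t_def partial_t_add algebra_simps)

lemma vf_u_add: "vf_u a b (x + y) = vf_u a b x + vf_u a b y"
  by (simp add: vf_u_def partial_u_add algebra_simps)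

lemma vf_t_mult: "vf_t a b (x * y) = x * vf_t a b y + y * vf_t a b x"
  by (simp add: vf_t_def partial_t_mult algebra_simps)

lemma vf_u_mult: "vf_u a b (x * y) = x * vf_u a b y + y * vf_u a b x"
  by (simp add: vf_u_def partial_u_mult algebra_simps)

lemma vf_t_const [simp]: "vf_t a b (const c) = 0"
  by (simp add: vf_t_def)

lemma vf_u_const [simp]: "vf_u a b (const c) = 0"
  by (simp add: vf_u_def)

lemma vf_t_const_mult: "vf_t a b (const c * x) = const c * vf_t a b x"
  by (simp add: vf_t_mult)

lemma vf_u_const_mult: "vf_u a b (const c * x) = const c * vf_u a b x"
  by (simp add: vf_u_mult)

lemma vf_t_sum: "vf_t a b (\<Sum>k\<in>K. P k) = (\<Sum>k\<in>K. vf_t a b (P k))"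
  using vf_t_add[of a b 0 0] by (induction K rule: infinite_finite_induct) (auto simp: vf_t_add)

lemma vf_u_sum: "vf_u a b (\<Sum>k\<in>K. P k) = (\<Sum>k\<in>K. vf_u a b (P k))"
  using vf_u_add[of a b 0 0] by (induction K rule: infinite_finite_induct) (auto simp: vf_u_add)

section \<open>Monomial vector fields and admissible degrees\<close>

definition int_pair :: "nat \<times> nat \<Rightarrow> int \<times> int" where
  "int_pair s = (int (fst s), int (snd s))"

definition nat_pair :: "int \<times> int \<Rightarrow> nat \<times> nat" where
  "nat_pair v = (nat (fst v), nat (snd v))"

lemma int_pair_eq_iff [simp]: "int_pair s = int_pair s' \<longleftrightarrow> s = s'"
  by (auto simp: int_pair_def prod_eq_iff)

lemma inj_int_pair: "inj int_pair"
  by (rule injI) simp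

lemma int_pair_add: "int_pair (s + s') = int_pair s + int_pair s'"
  by (simp add: int_pair_def)

lemma range_int_pair_iff: "v \<in> range int_pair \<longleftrightarrow> 0 \<le> fst v \<and> 0 \<le> snd v"
proof
  assume "0 \<le> fst v \<and> 0 \<le> snd v"
  hence "v = int_pair (nat_pair v)" by (simp add: int_pair_def nat_pair_def prod_eq_iff)
  thus "v \<in> range int_pair" by (rule range_eqI)
qed (auto simp: int_pair_def)

lemma nat_pair_int_pair [simp]: "nat_pair (int_pair s) = s"
  by (simp add: int_pair_def nat_pair_def)

lemma int_pair_nat_pair: "v \<in> range int_pair \<Longrightarrow> int_pair (nat_pair v) = v"
  by (auto simp: int_pair_def nat_pair_def)

text \<open>The field \<open>t\<^sup>a u\<^sup>b \<partial>/\<partial>t\<close> sends \<open>t\<^sup>x u\<^sup>y\<close> to \<open>x t\<^sup>x\<^sup>+\<^sup>a\<^sup>-\<^sup>1 u\<^sup>y\<^sup>+\<^sup>b\<close>: it is homogeneous of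
  degree \<open>(a - 1, b)\<close> and preserves \<open>k[S]\<close> exactly when that degree is \<open>t\<close>-admissible.\<close>

definition t_degree :: "nat \<times> nat \<Rightarrow> int \<times> int" where
  "t_degree e = (int (fst e) - 1, int (snd e))"

definition u_degree :: "nat \<times> nat \<Rightarrow> int \<times> int" where
  "u_degree e = (int (fst e), int (snd e) - 1)"

definition t_admissible :: "(nat \<times> nat) set \<Rightarrow> int \<times> int \<Rightarrow> bool" where
  "t_admissible S w \<longleftrightarrow> (\<forall>s\<in>S. 0 < fst s \<longrightarrow> int_pair s + w \<in> int_pair ` S)"

definition u_admissible :: "(nat \<times> nat) set \<Rightarrow> int \<times> int \<Rightarrow> bool" where
  "u_admissible S w \<longleftrightarrow> (\<forall>s\<in>S. 0 < snd s \<longrightarrow> int_pair s + w \<in> int_pair ` S)"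

definition monomial_fields ::
    "(nat \<times> nat) set \<Rightarrow> (nat \<times> nat) set \<Rightarrow> ('k::field pol2 \<Rightarrow> 'k pol2) set" where
  "monomial_fields T U = (\<lambda>(a, b). vf_t a b) ` T \<union> (\<lambda>(a, b). vf_u a b) ` U"

lemma single_in_semigroup_ring: "s \<in> S \<Longrightarrow> Poly_Mapping.single s c \<in> semigroup_ring S"
  by (auto simp: semigroup_ring_def)

lemma zero_in_semigroup_ring: "0 \<in> semigroup_ring S"
  by (auto simp: semigroup_ring_def)

lemma add_in_semigroup_ring:
  "x \<in> semigroup_ring S \<Longrightarrow> y \<in> semigroup_ring S \<Longrightarrow> x + y \<in> semigroup_ring S"
  using keys_add[of x y] by (auto simp: semigroup_ring_def)

lemma sum_in_semigroup_ring:
  "(\<And>k. k \<in> K \<Longrightarrow> P k \<in> semigroup_ring S) \<Longrightarrow> (\<Sum>k\<in>K. P k) \<in> semigroup_ring S"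
  using keys_sum[of P K] unfolding semigroup_ring_def by blast

lemma keys_subset_semigroup: "x \<in> semigroup_ring S \<Longrightarrow> s \<in> Poly_Mapping.keys x \<Longrightarrow> s \<in> S"
  by (auto simp: semigroup_ring_def)

lemma t_admissible_shift:
  assumes "t_admissible S (t_degree (a, b))" "s \<in> S" "0 < fst s"
  shows "(a + (fst s - 1), b + snd s) \<in> S"
proof -
  have "int_pair s + t_degree (a, b) = int_pair (a + (fst s - 1), b + snd s)"
    using assms(3) by (simp add: int_pair_def t_degree_def)
  moreover have "int_pair s + t_degree (a, b) \<in> int_pair ` S"
    using assms unfolding t_admissible_def by blast
  ultimately show ?thesis by (simp add: inj_image_mem_iff[OF inj_int_pair])
qed

lemma u_admissible_shift:
  assumes "u_admissible S (u_degree (a, b))" "s \<in> S" "0 < snd s"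
  shows "(a + fst s, b + (snd s - 1)) \<in> S"
proof -
  have "int_pair s + u_degree (a, b) = int_pair (a + fst s, b + (snd s - 1))"
    using assms(3) by (simp add: int_pair_def u_degree_def)
  moreover have "int_pair s + u_degree (a, b) \<in> int_pair ` S"
    using assms unfolding u_admissible_def by blast
  ultimately show ?thesis by (simp add: inj_image_mem_iff[OF inj_int_pair])
qed

lemma vf_t_in_semigroup_ring:
  assumes adm: "t_admissible S (t_degree (a, b))" and x: "x \<in> semigroup_ring S"
  shows "vf_t a b x \<in> (semigroup_ring S :: 'k::field pol2 set)"
proof -
  have "vf_t a b x = (\<Sum>s\<in>Poly_Mapping.keys x. vf_t a b (Poly_Mapping.single s (Poly_Mapping.lookup x s)))"
    by (subst poly_mapping_sum_single[of x]) (simp add: vf_t_sum)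
  also have "\<dots> \<in> semigroup_ring S"
  proof (intro sum_in_semigroup_ring)
    fix s assume "s \<in> Poly_Mapping.keys x"
    hence "s \<in> S" by (rule keys_subset_semigroup[OF x])
    thus "vf_t a b (Poly_Mapping.single s (Poly_Mapping.lookup x s)) \<in> semigroup_ring S"
      using t_admissible_shift[OF adm]
      by (cases "fst s = 0") (auto simp: vf_t_single zero_in_semigroup_ring single_in_semigroup_ring)
  qed
  finally show ?thesis .
qed

lemma vf_u_in_semigroup_ring:
  assumes adm: "u_admissible S (u_degree (a, b))" and x: "x \<in> semigroup_ring S"
  shows "vf_u a b x \<in> (semigroup_ring S :: 'k::field pol2 set)"
proof -
  have "vf_u a b x = (\<Sum>s\<in>Poly_Mapping.keys x. vf_u a b (Poly_Mapping.single s (Poly_Mapping.lookup x s)))"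
    by (subst poly_mapping_sum_single[of x]) (simp add: vf_u_sum)
  also have "\<dots> \<in> semigroup_ring S"
  proof (intro sum_in_semigroup_ring)
    fix s assume "s \<in> Poly_Mapping.keys x"
    hence "s \<in> S" by (rule keys_subset_semigroup[OF x])
    thus "vf_u a b (Poly_Mapping.single s (Poly_Mapping.lookup x s)) \<in> semigroup_ring S"
      using u_admissible_shift[OF adm]
      by (cases "snd s = 0") (auto simp: vf_u_single zero_in_semigroup_ring single_in_semigroup_ring)
  qed
  finally show ?thesis .
qed

lemma vf_t_in_Der: "t_admissible S (t_degree (a, b)) \<Longrightarrow> vf_t a b \<in> (Der S :: ('k::field pol2 \<Rightarrow> _) set)"
  by (simp add: Der_def vf_t_in_semigroup_ring vf_t_add vf_t_mult vf_t_const_mult)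

lemma vf_u_in_Der: "u_admissible S (u_degree (a, b)) \<Longrightarrow> vf_u a b \<in> (Der S :: ('k::field pol2 \<Rightarrow> _) set)"
  by (simp add: Der_def vf_u_in_semigroup_ring vf_u_add vf_u_mult vf_u_const_mult)

lemma vf_t_in_monomial_fields: "(a, b) \<in> T \<Longrightarrow> vf_t a b \<in> monomial_fields T U"
  by (force simp: monomial_fields_def)

lemma vf_u_in_monomial_fields: "(a, b) \<in> U \<Longrightarrow> vf_u a b \<in> monomial_fields T U"
  by (force simp: monomial_fields_def)

lemma monomial_fieldsE:
  assumes "g \<in> monomial_fields T U"
  obtains a b where "(a, b) \<in> T" "g = vf_t a b" | a b where "(a, b) \<in> U" "g = vf_u a b"
  using assms unfolding monomial_fields_def by auto

definition derivation_span ::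
    "(nat \<times> nat) set \<Rightarrow> ('k::field pol2 \<Rightarrow> 'k pol2) set \<Rightarrow> ('k pol2 \<Rightarrow> 'k pol2) set" where
  "derivation_span S G = {D. \<exists>r. (\<forall>g\<in>G. r g \<in> semigroup_ring S) \<and>
     (\<forall>x\<in>semigroup_ring S. D x = (\<Sum>g\<in>G. r g * g x))}"

lemma generates_Der_iff_subset_span: "generates_Der S G \<longleftrightarrow> Der S \<subseteq> derivation_span S G"
  by (auto simp: generates_Der_def derivation_span_def)

lemma derivation_span_zero: "(\<lambda>x. 0) \<in> derivation_span S G"
  unfolding derivation_span_def by (auto intro!: exI[of _ "\<lambda>_. 0"] zero_in_semigroup_ring)

lemma derivation_span_add:
  assumes "D \<in> derivation_span S G" "E \<in> derivation_span S G"
  shows "(\<lambda>x. D x + E x) \<in> derivation_span S G"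
proof -
  obtain r where r: "\<forall>g\<in>G. r g \<in> semigroup_ring S" "\<forall>x\<in>semigroup_ring S. D x = (\<Sum>g\<in>G. r g * g x)"
    using assms(1) by (auto simp: derivation_span_def)
  obtain r' where r': "\<forall>g\<in>G. r' g \<in> semigroup_ring S" "\<forall>x\<in>semigroup_ring S. E x = (\<Sum>g\<in>G. r' g * g x)"
    using assms(2) by (auto simp: derivation_span_def)
  show ?thesis unfolding derivation_span_def
    using r r' by (auto intro!: exI[of _ "\<lambda>g. r g + r' g"] add_in_semigroup_ring
        simp: distrib_right sum.distrib)
qed

lemma derivation_span_sum:
  "(\<And>w. w \<in> W \<Longrightarrow> E w \<in> derivation_span S G) \<Longrightarrow> (\<lambda>x. \<Sum>w\<in>W. E w x) \<in> derivation_span S G"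
  by (induction W rule: infinite_finite_induct)
    (auto simp: derivation_span_zero intro: derivation_span_add[where D="\<lambda>x. E _ x", simplified])

lemma derivation_span_generator:
  assumes "finite G" "g \<in> G" "r \<in> semigroup_ring S"
  shows "(\<lambda>x. r * g x) \<in> derivation_span S G"
  unfolding derivation_span_def
  using assms by (auto intro!: exI[of _ "\<lambda>h. if h = g then r else 0"] zero_in_semigroup_ring
      simp: if_distrib[where f="\<lambda>r. r * _"] cong: if_cong)

lemma derivation_span_cong:
  "E \<in> derivation_span S G \<Longrightarrow> (\<And>x. x \<in> semigroup_ring S \<Longrightarrow> D x = E x) \<Longrightarrow> D \<in> derivation_span S G"
  by (auto simp: derivation_span_def)

text \<open>\<open>euler_t w c\<close> is \<open>c X\<^sup>w t \<partial>/\<partial>t\<close> for a possibly negative exponent \<open>w\<close>: it sends \<open>X\<^sup>s\<close> to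
  \<open>c s\<^sub>1 X\<^sup>s\<^sup>+\<^sup>w\<close> (the exponent \<open>s + w\<close> is truncated at \<open>0\<close> when it leaves \<open>\<nat>\<^sup>2\<close>).\<close>

definition euler_t :: "int \<times> int \<Rightarrow> 'k::field \<Rightarrow> 'k pol2 \<Rightarrow> 'k pol2" where
  "euler_t w c x = (\<Sum>s\<in>Poly_Mapping.keys x.
     Poly_Mapping.single (nat_pair (int_pair s + w)) (c * of_nat (fst s) * Poly_Mapping.lookup x s))"

definition euler_u :: "int \<times> int \<Rightarrow> 'k::field \<Rightarrow> 'k pol2 \<Rightarrow> 'k pol2" where
  "euler_u w c x = (\<Sum>s\<in>Poly_Mapping.keys x.
     Poly_Mapping.single (nat_pair (int_pair s + w)) (c * of_nat (snd s) * Poly_Mapping.lookup x s))"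

lemma euler_t_zero [simp]: "euler_t w 0 x = 0"
  by (simp add: euler_t_def)

lemma euler_u_zero [simp]: "euler_u w 0 x = 0"
  by (simp add: euler_u_def)

lemma euler_t_eq_vf_t:
  assumes "w = t_degree (a, b) + int_pair \<sigma>"
  shows "euler_t w c x = Poly_Mapping.single \<sigma> c * vf_t a b (x :: 'k::field pol2)"
proof -
  have "Poly_Mapping.single \<sigma> c * vf_t a b (Poly_Mapping.single s e) =
      Poly_Mapping.single (nat_pair (int_pair s + w)) (c * of_nat (fst s) * e)" for s and e :: 'k
  proof (cases "fst s = 0")
    case False
    hence "nat_pair (int_pair s + w) = \<sigma> + (a + (fst s - 1), b + snd s)"
      using assms by (simp add: int_pair_def nat_pair_def t_degree_def prod_eq_iff nat_eq_iff)
    thus ?thesis by (simp add: vf_t_single mult_single mult.assoc)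
  qed (simp add: vf_t_single)
  thus ?thesis
    by (subst (2) poly_mapping_sum_single[of x]) (simp add: euler_t_def vf_t_sum sum_distrib_left)
qed

lemma euler_u_eq_vf_u:
  assumes "w = u_degree (a, b) + int_pair \<sigma>"
  shows "euler_u w c x = Poly_Mapping.single \<sigma> c * vf_u a b (x :: 'k::field pol2)"
proof -
  have "Poly_Mapping.single \<sigma> c * vf_u a b (Poly_Mapping.single s e) =
      Poly_Mapping.single (nat_pair (int_pair s + w)) (c * of_nat (snd s) * e)" for s and e :: 'k
  proof (cases "snd s = 0")
    case False
    hence "nat_pair (int_pair s + w) = \<sigma> + (a + fst s, b + (snd s - 1))"
      using assms by (simp add: int_pair_def nat_pair_def u_degree_def prod_eq_iff nat_eq_iff)
    thus ?thesis by (simp add: vf_u_single mult_single mult.assoc)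
  qed (simp add: vf_u_single)
  thus ?thesis
    by (subst (2) poly_mapping_sum_single[of x]) (simp add: euler_u_def vf_u_sum sum_distrib_left)
qed

section \<open>Homogeneous components of a derivation\<close>

locale axes_semigroup =
  fixes S :: "(nat \<times> nat) set" and N :: nat
  assumes zero_mem: "0 \<in> S" and add_mem: "s \<in> S \<Longrightarrow> s' \<in> S \<Longrightarrow> s + s' \<in> S"
    and N_pos: "0 < N" and N_t_mem: "(N, 0) \<in> S" and N_u_mem: "(0, N) \<in> S"
begin

lemma multiple_mem: "s \<in> S \<Longrightarrow> (m * fst s, m * snd s) \<in> S"
proof (induction m)
  case (Suc m)
  have "(Suc m * fst s, Suc m * snd s) = (m * fst s, m * snd s) + s" by (simp add: prod_eq_iff)
  thus ?case using Suc add_mem by metis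
qed (simp add: zero_mem[unfolded zero_prod_def])

end

locale semigroup_derivation = axes_semigroup +
  fixes D :: "'k::field_char_0 pol2 \<Rightarrow> 'k pol2"
  assumes D_Der: "D \<in> Der S"
begin

lemma D_in_semigroup_ring: "x \<in> semigroup_ring S \<Longrightarrow> D x \<in> semigroup_ring S"
  and D_add: "x \<in> semigroup_ring S \<Longrightarrow> y \<in> semigroup_ring S \<Longrightarrow> D (x + y) = D x + D y"
  and D_mult: "x \<in> semigroup_ring S \<Longrightarrow> y \<in> semigroup_ring S \<Longrightarrow> D (x * y) = x * D y + y * D x"
  and D_const_mult: "x \<in> semigroup_ring S \<Longrightarrow> D (const c * x) = const c * D x"
  using D_Der unfolding Der_def by auto

lemma D_sum:
  "finite K \<Longrightarrow> (\<And>k. k \<in> K \<Longrightarrow> P k \<in> semigroup_ring S) \<Longrightarrow> D (\<Sum>k\<in>K. P k) = (\<Sum>k\<in>K. D (P k))"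
proof (induction K rule: finite_induct)
  case empty
  show ?case using D_add[OF zero_in_semigroup_ring zero_in_semigroup_ring] by simp
next
  case (insert k K)
  thus ?case by (simp add: D_add sum_in_semigroup_ring)
qed

lemma D_expand:
  assumes x: "x \<in> semigroup_ring S"
  shows "D x = (\<Sum>s\<in>Poly_Mapping.keys x. const (Poly_Mapping.lookup x s) * D (X s))"
proof -
  have mem: "const (Poly_Mapping.lookup x s) * X s \<in> semigroup_ring S"
    if "s \<in> Poly_Mapping.keys x" for s
    using keys_subset_semigroup[OF x that]
    by (simp add: const_def mult_single zero_prod_def[symmetric] single_in_semigroup_ring)
  have "D x = D (\<Sum>s\<in>Poly_Mapping.keys x. const (Poly_Mapping.lookup x s) * X s)"
    by (subst pol2_sum_const_X[of x]) (rule refl)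
  also have "\<dots> = (\<Sum>s\<in>Poly_Mapping.keys x. const (Poly_Mapping.lookup x s) * D (X s))"
    using keys_subset_semigroup[OF x]
    by (simp add: D_sum mem D_const_mult single_in_semigroup_ring)
  finally show ?thesis .
qed

text \<open>\<open>hcoeff w s\<close> is the coefficient of \<open>X\<^sup>s\<^sup>+\<^sup>w\<close> in \<open>D X\<^sup>s\<close>; the Leibniz rule makes it additive
  in \<open>s\<close>, hence determined by its values at \<open>(N, 0)\<close> and \<open>(0, N)\<close>.\<close>

definition hcoeff :: "int \<times> int \<Rightarrow> nat \<times> nat \<Rightarrow> 'k" where
  "hcoeff w s = (if int_pair s + w \<in> range int_pair
     then Poly_Mapping.lookup (D (X s)) (nat_pair (int_pair s + w)) else 0)"

lemma hcoeff_add: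
  assumes s: "s \<in> S" and s': "s' \<in> S"
  shows "hcoeff w (s + s') = hcoeff w s + hcoeff w s'"
proof -
  have "X (s + s') = X s * (X s' :: 'k pol2)" by (simp add: mult_single)
  hence DX: "D (X (s + s')) = X s * D (X s') + X s' * D (X s)"
    using D_mult[OF single_in_semigroup_ring[OF s] single_in_semigroup_ring[OF s']] by simp
  show ?thesis
  proof (cases "int_pair (s + s') + w \<in> range int_pair")
    case False
    hence "int_pair s + w \<notin> range int_pair" "int_pair s' + w \<notin> range int_pair"
      unfolding range_int_pair_iff by (auto simp: int_pair_def)
    thus ?thesis using False by (simp add: hcoeff_def)
  next
    case True
    have "Poly_Mapping.lookup (X s * D (X s')) (nat_pair (int_pair (s + s') + w)) = hcoeff w s'"
      "Poly_Mapping.lookup (X s' * D (X s)) (nat_pair (int_pair (s + s') + w)) = hcoeff w s"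
      using True unfolding hcoeff_def range_int_pair_iff
      by (auto simp: lookup_single_times int_pair_def nat_pair_def nat_add_distrib
          intro!: arg_cong[where f = "Poly_Mapping.lookup _"])
    thus ?thesis using True by (simp add: hcoeff_def DX lookup_add)
  qed
qed

lemma hcoeff_multiple: "s \<in> S \<Longrightarrow> hcoeff w (m * fst s, m * snd s) = of_nat m * hcoeff w s"
proof (induction m)
  case 0
  show ?case using hcoeff_add[OF zero_mem zero_mem, of w] by (simp add: zero_prod_def)
next
  case (Suc m)
  have "(Suc m * fst s, Suc m * snd s) = (m * fst s, m * snd s) + s" by (simp add: prod_eq_iff)
  thus ?case using Suc hcoeff_add[OF multiple_mem[OF Suc.prems] Suc.prems] by (simp add: algebra_simps)
qed

lemma hcoeff_linear:
  assumes s: "s \<in> S"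
  shows "of_nat N * hcoeff w s = of_nat (fst s) * hcoeff w (N, 0) + of_nat (snd s) * hcoeff w (0, N)"
proof -
  have t: "(fst s * N, 0) \<in> S" "hcoeff w (fst s * N, 0) = of_nat (fst s) * hcoeff w (N, 0)"
    using multiple_mem[OF N_t_mem, of "fst s"] hcoeff_multiple[OF N_t_mem, of w "fst s"] by simp_all
  have u: "(0, snd s * N) \<in> S" "hcoeff w (0, snd s * N) = of_nat (snd s) * hcoeff w (0, N)"
    using multiple_mem[OF N_u_mem, of "snd s"] hcoeff_multiple[OF N_u_mem, of w "snd s"] by simp_all
  have "of_nat N * hcoeff w s = hcoeff w ((fst s * N, 0) + (0, snd s * N))"
    using hcoeff_multiple[OF s, of w N] by (simp add: mult.commute)
  also have "\<dots> = of_nat (fst s) * hcoeff w (N, 0) + of_nat (snd s) * hcoeff w (0, N)"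
    using hcoeff_add[OF t(1) u(1)] t(2) u(2) by simp
  finally show ?thesis .
qed

text \<open>The degree-\<open>w\<close> part of \<open>D\<close> is \<open>X\<^sup>w (t_weight w \<cdot> t \<partial>/\<partial>t + u_weight w \<cdot> u \<partial>/\<partial>u)\<close>; the division
  by \<open>N\<close> is where characteristic \<open>0\<close> is needed.\<close>

definition t_weight :: "int \<times> int \<Rightarrow> 'k" where
  "t_weight w = hcoeff w (N, 0) / of_nat N"

definition u_weight :: "int \<times> int \<Rightarrow> 'k" where
  "u_weight w = hcoeff w (0, N) / of_nat N"

lemma hcoeff_eq_weights:
  "s \<in> S \<Longrightarrow> hcoeff w s = of_nat (fst s) * t_weight w + of_nat (snd s) * u_weight w"
  using hcoeff_linear[of s w] N_pos by (simp add: t_weight_def u_weight_def field_simps)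

lemma hcoeff_nonzero_shift_mem:
  assumes s: "s \<in> S" and nz: "hcoeff w s \<noteq> 0"
  shows "int_pair s + w \<in> int_pair ` S"
proof -
  have range: "int_pair s + w \<in> range int_pair"
    and key: "nat_pair (int_pair s + w) \<in> Poly_Mapping.keys (D (X s))"
    using nz by (auto simp: hcoeff_def in_keys_iff split: if_splits)
  have "nat_pair (int_pair s + w) \<in> S"
    using keys_subset_semigroup[OF D_in_semigroup_ring[OF single_in_semigroup_ring[OF s]] key] .
  thus ?thesis using int_pair_nat_pair[OF range] by (metis image_eqI)
qed

lemma t_weight_nonzero_admissible:
  assumes both_axes: "int_pair (N, 0) + w \<in> int_pair ` S \<Longrightarrow> int_pair (0, N) + w \<in> int_pair ` S \<Longrightarrow>
      t_admissible S w"
    and nz: "t_weight w \<noteq> 0"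
  shows "t_admissible S w"
proof (cases "u_weight w = 0")
  case True
  thus ?thesis using nz
    by (auto simp: t_admissible_def intro!: hcoeff_nonzero_shift_mem simp: hcoeff_eq_weights)
next
  case False
  thus ?thesis using nz N_pos N_t_mem N_u_mem
    by (intro both_axes hcoeff_nonzero_shift_mem) (auto simp: hcoeff_eq_weights)
qed

lemma u_weight_nonzero_admissible:
  assumes both_axes: "int_pair (N, 0) + w \<in> int_pair ` S \<Longrightarrow> int_pair (0, N) + w \<in> int_pair ` S \<Longrightarrow>
      u_admissible S w"
    and nz: "u_weight w \<noteq> 0"
  shows "u_admissible S w"
proof (cases "t_weight w = 0")
  case True
  thus ?thesis using nz
    by (auto simp: u_admissible_def intro!: hcoeff_nonzero_shift_mem simp: hcoeff_eq_weights)
next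
  case False
  thus ?thesis using nz N_pos N_t_mem N_u_mem
    by (intro both_axes hcoeff_nonzero_shift_mem) (auto simp: hcoeff_eq_weights)
qed

definition degrees :: "(int \<times> int) set" where
  "degrees = (\<lambda>v. int_pair v - int_pair (N, 0)) ` Poly_Mapping.keys (D (X (N, 0)))
     \<union> (\<lambda>v. int_pair v - int_pair (0, N)) ` Poly_Mapping.keys (D (X (0, N)))"

lemma finite_degrees: "finite degrees"
  by (simp add: degrees_def)

lemma hcoeff_axes_outside_degrees:
  assumes "w \<notin> degrees"
  shows "hcoeff w (N, 0) = 0" and "hcoeff w (0, N) = 0"
proof -
  have "hcoeff w e = 0" if "e = (N, 0) \<or> e = (0, N)" for e
  proof (rule ccontr)
    assume "hcoeff w e \<noteq> 0"
    hence range: "int_pair e + w \<in> range int_pair"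
      and key: "nat_pair (int_pair e + w) \<in> Poly_Mapping.keys (D (X e))"
      by (auto simp: hcoeff_def in_keys_iff split: if_splits)
    have "w = int_pair (nat_pair (int_pair e + w)) - int_pair e"
      using int_pair_nat_pair[OF range] by simp
    thus False using key assms that by (auto simp: degrees_def)
  qed
  thus "hcoeff w (N, 0) = 0" "hcoeff w (0, N) = 0" by auto
qed

lemma D_X_expand:
  assumes s: "s \<in> S"
  shows "D (X s) = (\<Sum>w\<in>degrees. Poly_Mapping.single (nat_pair (int_pair s + w)) (hcoeff w s))"
proof (rule poly_mapping_eqI)
  fix v :: "nat \<times> nat"
  define w0 where "w0 = int_pair v - int_pair s"
  have lookup_summand: "Poly_Mapping.lookup (Poly_Mapping.single (nat_pair (int_pair s + w)) (hcoeff w s)) v =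
      (if w = w0 then hcoeff w s else 0)" for w
  proof (cases "hcoeff w s = 0")
    case False
    hence "int_pair s + w \<in> range int_pair" by (auto simp: hcoeff_def split: if_splits)
    hence "nat_pair (int_pair s + w) = v \<longleftrightarrow> int_pair s + w = int_pair v"
      by (metis int_pair_nat_pair nat_pair_int_pair)
    hence "nat_pair (int_pair s + w) = v \<longleftrightarrow> w = w0"
      by (auto simp: w0_def algebra_simps)
    thus ?thesis by (auto simp: lookup_single when_def)
  qed auto
  have "hcoeff w0 s = 0" if "w0 \<notin> degrees"
    using hcoeff_linear[OF s, of w0] hcoeff_axes_outside_degrees[OF that] N_pos by simp
  moreover have "hcoeff w0 s = Poly_Mapping.lookup (D (X s)) v"
    by (simp add: hcoeff_def w0_def)
  ultimately show "Poly_Mapping.lookup (D (X s)) v = Poly_Mapping.lookup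
      (\<Sum>w\<in>degrees. Poly_Mapping.single (nat_pair (int_pair s + w)) (hcoeff w s)) v"
    using finite_degrees by (auto simp: lookup_sum lookup_summand)
qed

lemma D_eq_sum_euler:
  assumes x: "x \<in> semigroup_ring S"
  shows "D x = (\<Sum>w\<in>degrees. euler_t w (t_weight w) x + euler_u w (u_weight w) x)"
proof -
  have "D x = (\<Sum>s\<in>Poly_Mapping.keys x. \<Sum>w\<in>degrees. const (Poly_Mapping.lookup x s) *
      Poly_Mapping.single (nat_pair (int_pair s + w)) (hcoeff w s))"
    using keys_subset_semigroup[OF x] by (simp add: D_expand[OF x] D_X_expand sum_distrib_left)
  also have "\<dots> = (\<Sum>s\<in>Poly_Mapping.keys x. \<Sum>w\<in>degrees.
      Poly_Mapping.single (nat_pair (int_pair s + w)) (t_weight w * of_nat (fst s) * Poly_Mapping.lookup x s) +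
      Poly_Mapping.single (nat_pair (int_pair s + w)) (u_weight w * of_nat (snd s) * Poly_Mapping.lookup x s))"
    using keys_subset_semigroup[OF x]
    by (intro sum.cong refl) (simp add: const_def mult_single zero_prod_def[symmetric]
        single_add[symmetric] hcoeff_eq_weights algebra_simps)
  also have "\<dots> = (\<Sum>w\<in>degrees. euler_t w (t_weight w) x + euler_u w (u_weight w) x)"
    by (subst sum.swap) (simp add: euler_t_def euler_u_def sum.distrib)
  finally show ?thesis .
qed

end

section \<open>Minimal generation by monomial fields\<close>

locale monomial_derivation_basis = axes_semigroup +
  fixes T U :: "(nat \<times> nat) set"
  assumes admissible_if_both_axes: "int_pair (N, 0) + w \<in> int_pair ` S \<Longrightarrow>
      int_pair (0, N) + w \<in> int_pair ` S \<Longrightarrow> t_admissible S w \<and> u_admissible S w"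
    and finite_T: "finite T" and finite_U: "finite U"
    and T_admissible: "e \<in> T \<Longrightarrow> t_admissible S (t_degree e)"
    and U_admissible: "e \<in> U \<Longrightarrow> u_admissible S (u_degree e)"
    and T_covers: "t_admissible S w \<Longrightarrow> \<exists>e\<in>T. \<exists>\<sigma>\<in>S. w = t_degree e + int_pair \<sigma>"
    and U_covers: "u_admissible S w \<Longrightarrow> \<exists>e\<in>U. \<exists>\<sigma>\<in>S. w = u_degree e + int_pair \<sigma>"
    and T_antichain: "e \<in> T \<Longrightarrow> e' \<in> T \<Longrightarrow> \<sigma> \<in> S \<Longrightarrow> e' + \<sigma> = e \<Longrightarrow> \<sigma> = 0"
    and U_antichain: "e \<in> U \<Longrightarrow> e' \<in> U \<Longrightarrow> \<sigma> \<in> S \<Longrightarrow> e' + \<sigma> = e \<Longrightarrow> \<sigma> = 0"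
begin

lemma finite_monomial_fields: "finite (monomial_fields T U)"
  using finite_T finite_U by (simp add: monomial_fields_def)

lemma monomial_fields_subset_Der: "monomial_fields T U \<subseteq> (Der S :: ('k::field pol2 \<Rightarrow> _) set)"
  using T_admissible U_admissible by (auto simp: monomial_fields_def intro: vf_t_in_Der vf_u_in_Der)

lemma euler_t_in_span:
  assumes "c \<noteq> 0 \<Longrightarrow> t_admissible S w"
  shows "(\<lambda>x. euler_t w c x) \<in> derivation_span S (monomial_fields T U :: ('k::field pol2 \<Rightarrow> _) set)"
proof (cases "c = 0")
  case False
  then obtain e \<sigma> where e: "e \<in> T" "\<sigma> \<in> S" "w = t_degree e + int_pair \<sigma>"
    using assms T_covers by blast
  obtain a b where ab: "e = (a, b)" by fastforce
  have "(\<lambda>x. Poly_Mapping.single \<sigma> c * vf_t a b x) \<in> derivation_span S (monomial_fields T U)"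
    using e ab by (intro derivation_span_generator finite_monomial_fields vf_t_in_monomial_fields
        single_in_semigroup_ring) auto
  thus ?thesis unfolding euler_t_eq_vf_t[OF e(3)[unfolded ab]] .
qed (simp add: derivation_span_zero)

lemma euler_u_in_span:
  assumes "c \<noteq> 0 \<Longrightarrow> u_admissible S w"
  shows "(\<lambda>x. euler_u w c x) \<in> derivation_span S (monomial_fields T U :: ('k::field pol2 \<Rightarrow> _) set)"
proof (cases "c = 0")
  case False
  then obtain e \<sigma> where e: "e \<in> U" "\<sigma> \<in> S" "w = u_degree e + int_pair \<sigma>"
    using assms U_covers by blast
  obtain a b where ab: "e = (a, b)" by fastforce
  have "(\<lambda>x. Poly_Mapping.single \<sigma> c * vf_u a b x) \<in> derivation_span S (monomial_fields T U)"
    using e ab by (intro derivation_span_generator finite_monomial_fields vf_u_in_monomial_fields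
        single_in_semigroup_ring) auto
  thus ?thesis unfolding euler_u_eq_vf_u[OF e(3)[unfolded ab]] .
qed (simp add: derivation_span_zero)

lemma Der_subset_span:
  assumes D: "D \<in> (Der S :: ('k::field_char_0 pol2 \<Rightarrow> _) set)"
  shows "D \<in> derivation_span S (monomial_fields T U)"
proof -
  interpret semigroup_derivation S N D
    by unfold_locales (rule D)
  have "(\<lambda>x. \<Sum>w\<in>degrees. euler_t w (t_weight w) x + euler_u w (u_weight w) x)
      \<in> derivation_span S (monomial_fields T U)"
    using admissible_if_both_axes
    by (intro derivation_span_sum derivation_span_add euler_t_in_span euler_u_in_span)
      (blast intro: t_weight_nonzero_admissible u_weight_nonzero_admissible)+
  thus ?thesis using D_eq_sum_euler by (rule derivation_span_cong)
qed

text \<open>Minimality: evaluate at \<open>t\<^sup>N\<close>.  The field \<open>t\<^sup>a u\<^sup>b \<partial>/\<partial>t\<close> produces the monomial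
  \<open>N t\<^sup>a\<^sup>+\<^sup>N\<^sup>-\<^sup>1 u\<^sup>b\<close>, which another \<open>\<partial>/\<partial>t\<close>-generator could only reach through a coefficient of
  exponent in \<open>S\<close>, contradicting the antichain condition; \<open>\<partial>/\<partial>u\<close>-generators kill \<open>t\<^sup>N\<close>.\<close>

lemma vf_t_not_in_span_of_others:
  assumes e: "(a, b) \<in> T"
    and H: "H \<subseteq> monomial_fields T U - {vf_t a b :: 'k::field_char_0 pol2 \<Rightarrow> 'k pol2}"
  shows "vf_t a b \<notin> derivation_span S H"
proof
  assume "vf_t a b \<in> derivation_span S H"
  then obtain r where r: "\<forall>h\<in>H. r h \<in> semigroup_ring S"
    and eq: "\<forall>x\<in>semigroup_ring S. vf_t a b x = (\<Sum>h\<in>H. r h * h x)"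
    by (auto simp: derivation_span_def)
  let ?x = "X (N, 0) :: 'k pol2" and ?v = "(a + (N - 1), b)"
  have vanish: "Poly_Mapping.lookup (r h * h ?x) ?v = 0" if h: "h \<in> H" for h
  proof -
    from h H have "h \<in> monomial_fields T U" by blast
    thus ?thesis
    proof (cases rule: monomial_fieldsE)
      case (1 a' b')
      note e' = 1(1) and h_eq = 1(2)
      show ?thesis
      proof (rule ccontr)
        assume "Poly_Mapping.lookup (r h * h ?x) ?v \<noteq> 0"
        hence "Poly_Mapping.lookup (Poly_Mapping.single (a' + (N - 1), b') (of_nat N) * r h) ?v \<noteq> 0"
          by (simp add: h_eq vf_t_single mult.commute)
        hence le: "a' \<le> a" "b' \<le> b" and key: "(a - a', b - b') \<in> Poly_Mapping.keys (r h)"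
          by (auto simp: lookup_single_times in_keys_iff split: if_splits)
        have "(a', b') + (a - a', b - b') = (a, b)" using le by simp
        hence "(a - a', b - b') = 0"
          using T_antichain[OF e e'] keys_subset_semigroup[OF r[rule_format, OF h] key] by blast
        hence "h = vf_t a b" using le h_eq by (simp add: zero_prod_def)
        thus False using h H by blast
      qed
    qed (simp add: vf_u_single)
  qed
  have "of_nat N = Poly_Mapping.lookup (vf_t a b ?x) ?v" by (simp add: vf_t_single)
  also have "\<dots> = (\<Sum>h\<in>H. Poly_Mapping.lookup (r h * h ?x) ?v)"
    using eq[rule_format, OF single_in_semigroup_ring[OF N_t_mem]] by (simp add: lookup_sum)
  also have "\<dots> = 0" using vanish by simp
  finally show False using N_pos by simp
qed

lemma vf_u_not_in_span_of_others:
  assumes e: "(a, b) \<in> U"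
    and H: "H \<subseteq> monomial_fields T U - {vf_u a b :: 'k::field_char_0 pol2 \<Rightarrow> 'k pol2}"
  shows "vf_u a b \<notin> derivation_span S H"
proof
  assume "vf_u a b \<in> derivation_span S H"
  then obtain r where r: "\<forall>h\<in>H. r h \<in> semigroup_ring S"
    and eq: "\<forall>x\<in>semigroup_ring S. vf_u a b x = (\<Sum>h\<in>H. r h * h x)"
    by (auto simp: derivation_span_def)
  let ?x = "X (0, N) :: 'k pol2" and ?v = "(a, b + (N - 1))"
  have vanish: "Poly_Mapping.lookup (r h * h ?x) ?v = 0" if h: "h \<in> H" for h
  proof -
    from h H have "h \<in> monomial_fields T U" by blast
    thus ?thesis
    proof (cases rule: monomial_fieldsE)
      case (2 a' b')
      note e' = 2(1) and h_eq = 2(2)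
      show ?thesis
      proof (rule ccontr)
        assume "Poly_Mapping.lookup (r h * h ?x) ?v \<noteq> 0"
        hence "Poly_Mapping.lookup (Poly_Mapping.single (a', b' + (N - 1)) (of_nat N) * r h) ?v \<noteq> 0"
          by (simp add: h_eq vf_u_single mult.commute)
        hence le: "a' \<le> a" "b' \<le> b" and key: "(a - a', b - b') \<in> Poly_Mapping.keys (r h)"
          by (auto simp: lookup_single_times in_keys_iff split: if_splits)
        have "(a', b') + (a - a', b - b') = (a, b)" using le by simp
        hence "(a - a', b - b') = 0"
          using U_antichain[OF e e'] keys_subset_semigroup[OF r[rule_format, OF h] key] by blast
        hence "h = vf_u a b" using le h_eq by (simp add: zero_prod_def)
        thus False using h H by blast
      qed
    qed (simp add: vf_t_single)
  qed
  have "of_nat N = Poly_Mapping.lookup (vf_u a b ?x) ?v" by (simp add: vf_u_single)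
  also have "\<dots> = (\<Sum>h\<in>H. Poly_Mapping.lookup (r h * h ?x) ?v)"
    using eq[rule_format, OF single_in_semigroup_ring[OF N_u_mem]] by (simp add: lookup_sum)
  also have "\<dots> = 0" using vanish by simp
  finally show False using N_pos by simp
qed

theorem minimally_generates_monomial_fields:
  "minimally_generates_Der S (monomial_fields T U :: ('k::field_char_0 pol2 \<Rightarrow> _) set)"
  unfolding minimally_generates_Der_def generates_Der_iff_subset_span
proof (intro conjI allI impI notI)
  show "finite (monomial_fields T U :: ('k pol2 \<Rightarrow> _) set)" by (rule finite_monomial_fields)
  show "monomial_fields T U \<subseteq> (Der S :: ('k pol2 \<Rightarrow> _) set)" by (rule monomial_fields_subset_Der)
  show "Der S \<subseteq> derivation_span S (monomial_fields T U :: ('k pol2 \<Rightarrow> _) set)"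
    using Der_subset_span by blast
  fix H :: "('k pol2 \<Rightarrow> 'k pol2) set"
  assume H: "H \<subset> monomial_fields T U" and "Der S \<subseteq> derivation_span S H"
  then obtain g where g: "g \<in> monomial_fields T U" "g \<notin> H" "g \<in> derivation_span S H"
    using monomial_fields_subset_Der by blast
  from g(1) show False
  proof (cases rule: monomial_fieldsE)
    case (1 a b)
    thus False using H g vf_t_not_in_span_of_others[of a b H] by blast
  next
    case (2 a b)
    thus False using H g vf_u_not_in_span_of_others[of a b H] by blast
  qed
qed

end

section \<open>The semigroup of an arithmetic sequence\<close>

lemma int_pair_plus_Pair: "int_pair s + (x, y) = (int (fst s) + x, int (snd s) + y)"
  by (simp add: int_pair_def)

lemma sgrp_gen_split_off_generator:
  fixes \<phi> :: "'a::comm_monoid_add \<Rightarrow> nat"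
  assumes hom: "\<And>x y. \<phi> (x + y) = \<phi> x + \<phi> y"
    and s: "s \<in> sgrp_gen G" and pos: "0 < \<phi> s"
  shows "\<exists>g\<in>G. 0 < \<phi> g \<and> (\<exists>s'\<in>sgrp_gen G. s = g + s')"
  using s pos
proof (induction rule: sgrp_gen.induct)
  case zero
  have "\<phi> 0 = 0" using hom[of 0 0] by simp
  thus ?case using zero by simp
next
  case (gen g)
  have "g = g + 0" by simp
  thus ?case using gen sgrp_gen.zero by blast
next
  case (add x y)
  show ?case
  proof (cases "0 < \<phi> x")
    case True
    then obtain g x' where g: "g \<in> G" "0 < \<phi> g" "x' \<in> sgrp_gen G" "x = g + x'"
      using add.IH(1) by blast
    have "x' + y \<in> sgrp_gen G" by (rule sgrp_gen.add[OF g(3) add.hyps(2)])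
    moreover have "x + y = g + (x' + y)" using g(4) by (simp add: add.assoc)
    ultimately show ?thesis using g(1,2) by blast
  next
    case False
    hence "0 < \<phi> y" using add.prems hom by simp
    then obtain g y' where g: "g \<in> G" "0 < \<phi> g" "y' \<in> sgrp_gen G" "y = g + y'"
      using add.IH(2) by blast
    have "x + y' \<in> sgrp_gen G" by (rule sgrp_gen.add[OF add.hyps(1) g(3)])
    moreover have "x + y = g + (x + y')" using g(4) by (simp add: add_ac)
    ultimately show ?thesis using g(1,2) by blast
  qed
qed

lemma pair_zero_in_sgrp_gen: "(0, 0) \<in> sgrp_gen G"
  using sgrp_gen.zero[of G] by (simp add: zero_prod_def)

lemma int_pair_image_add:
  assumes "v \<in> int_pair ` sgrp_gen G" "s \<in> sgrp_gen G"
  shows "v + int_pair s \<in> int_pair ` sgrp_gen G"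
  using assms by (auto simp: int_pair_add[symmetric] intro: sgrp_gen.add)

text \<open>Admissibility only has to be checked on generators, since every \<open>s\<close> with \<open>s\<^sub>1 > 0\<close> is
  a generator \<open>g\<close> with \<open>g\<^sub>1 > 0\<close> plus an element of the semigroup.\<close>

lemma t_admissible_sgrp_genI:
  assumes "\<And>g. g \<in> G \<Longrightarrow> 0 < fst g \<Longrightarrow> int_pair g + w \<in> int_pair ` sgrp_gen G"
  shows "t_admissible (sgrp_gen G) w"
  unfolding t_admissible_def
proof (intro ballI impI)
  fix s assume s: "s \<in> sgrp_gen G" and pos: "0 < fst s"
  then obtain g s' where g: "g \<in> G" "0 < fst g" "s' \<in> sgrp_gen G" "s = g + s'"
    using sgrp_gen_split_off_generator[where \<phi> = fst, OF fst_add s pos] by blast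
  have "int_pair s + w = (int_pair g + w) + int_pair s'"
    using g(4) by (simp add: int_pair_add add_ac)
  thus "int_pair s + w \<in> int_pair ` sgrp_gen G"
    using int_pair_image_add[OF assms[OF g(1,2)] g(3)] by (simp only:)
qed

lemma u_admissible_sgrp_genI:
  assumes "\<And>g. g \<in> G \<Longrightarrow> 0 < snd g \<Longrightarrow> int_pair g + w \<in> int_pair ` sgrp_gen G"
  shows "u_admissible (sgrp_gen G) w"
  unfolding u_admissible_def
proof (intro ballI impI)
  fix s assume s: "s \<in> sgrp_gen G" and pos: "0 < snd s"
  then obtain g s' where g: "g \<in> G" "0 < snd g" "s' \<in> sgrp_gen G" "s = g + s'"
    using sgrp_gen_split_off_generator[where \<phi> = snd, OF snd_add s pos] by blast
  have "int_pair s + w = (int_pair g + w) + int_pair s'"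
    using g(4) by (simp add: int_pair_add add_ac)
  thus "int_pair s + w \<in> int_pair ` sgrp_gen G"
    using int_pair_image_add[OF assms[OF g(1,2)] g(3)] by (simp only:)
qed

locale arithmetic_semigroup =
  fixes n0 d p :: nat
  assumes p_ge_2: "2 \<le> p" and d_pos: "0 < d" and p_less_n0: "p < n0"
    and coprime_n0_d: "coprime n0 d"
begin

definition N :: nat where
  "N = n0 + p * d"

definition gens :: "(nat \<times> nat) set" where
  "gens = {(0, N)} \<union> {(n0 + m * d, N - (n0 + m * d)) | m. m \<le> p}"

text \<open>All generators have total degree \<open>N\<close>; a sum of \<open>k\<close> of them, \<open>i\<close> of which differ from
  \<open>(0, N)\<close>, has first coordinate \<open>i n\<^sub>0 + l d\<close> with \<open>l \<le> i p\<close>.\<close>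

definition S_arith :: "(nat \<times> nat) set" where
  "S_arith = {(x, y). \<exists>k i l. i \<le> k \<and> l \<le> i * p \<and> x = i * n0 + l * d \<and> x + y = k * N}"

lemma N_pos: "0 < N"
  using p_less_n0 by (simp add: N_def)

lemma level_bound: "l \<le> i * p \<Longrightarrow> i * n0 + l * d \<le> i * N"
  using mult_le_mono1[of l "i * p" d] by (simp add: N_def algebra_simps)

lemma level_split: "l \<le> i * p \<Longrightarrow> i * N = i * n0 + l * d + (i * p - l) * d"
proof -
  assume "l \<le> i * p"
  then obtain r where r: "i * p = l + r" using le_Suc_ex by blast
  have "i * N = i * n0 + (i * p) * d" by (simp add: N_def algebra_simps)
  thus ?thesis using r by (simp add: algebra_simps)
qed

lemma representation_shift_le:
  assumes eq: "i * n0 + l * d = i' * n0 + l' * d" and le: "i' \<le> i"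
  shows "\<exists>t. i = i' + t * d \<and> l' = l + t * n0"
proof -
  obtain j where j: "i = i' + j" using le le_Suc_ex by blast
  have "j * n0 + l * d = l' * d" using eq unfolding j by (simp add: algebra_simps)
  moreover from this have "l \<le> l'" using d_pos by (metis le_add2 mult_le_cancel2)
  then obtain e where e: "l' = l + e" using le_Suc_ex by blast
  ultimately have e': "j * n0 = e * d" by (simp add: algebra_simps)
  hence "d dvd j" using coprime_n0_d
    by (metis coprime_commute coprime_dvd_mult_left_iff dvd_triv_right)
  then obtain t where "j = d * t" by (rule dvdE)
  hence t: "j = t * d" by simp
  hence "e = t * n0" using e' d_pos by (simp add: algebra_simps)
  thus ?thesis using t j e by blast
qed

lemma representation_shift:
  assumes "i * n0 + l * d = i' * n0 + l' * d"
  shows "(\<exists>t. i = i' + t * d \<and> l' = l + t * n0) \<or> (\<exists>t. i' = i + t * d \<and> l = l' + t * n0)"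
  using representation_shift_le[OF assms] representation_shift_le[OF assms[symmetric]]
  by (cases "i' \<le> i") auto

lemma S_arith_add: "s \<in> S_arith \<Longrightarrow> s' \<in> S_arith \<Longrightarrow> s + s' \<in> S_arith"
proof -
  assume "s \<in> S_arith" "s' \<in> S_arith"
  then obtain k i l k' i' l' where h: "i \<le> k" "l \<le> i * p" "fst s = i * n0 + l * d" "fst s + snd s = k * N"
    and h': "i' \<le> k'" "l' \<le> i' * p" "fst s' = i' * n0 + l' * d" "fst s' + snd s' = k' * N"
    unfolding S_arith_def by (auto simp: case_prod_unfold)
  hence "i + i' \<le> k + k'" "l + l' \<le> (i + i') * p" "fst (s + s') = (i + i') * n0 + (l + l') * d"
    "fst (s + s') + snd (s + s') = (k + k') * N"
    by (simp_all add: algebra_simps)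
  thus ?thesis unfolding S_arith_def mem_Collect_eq case_prod_unfold
    by (intro exI[of _ "k + k'"] exI[of _ "i + i'"] exI[of _ "l + l'"]) simp
qed

lemma gen_in_S_arith: "m \<le> p \<Longrightarrow> (n0 + m * d, N - (n0 + m * d)) \<in> S_arith"
  unfolding S_arith_def N_def by (intro CollectI case_prodI exI[of _ 1] exI[of _ m]) auto

lemma u_axis_in_S_arith: "(0, k * N) \<in> S_arith"
  unfolding S_arith_def by (intro CollectI case_prodI exI[of _ k] exI[of _ 0]) auto

lemma t_axis_in_S_arith: "(k * N, 0) \<in> S_arith"
  unfolding S_arith_def
  by (intro CollectI case_prodI exI[of _ k] exI[of _ "k * p"]) (auto simp: N_def algebra_simps)

lemma level_point_in_sgrp_gen:
  "l \<le> i * p \<Longrightarrow> (i * n0 + l * d, i * N - (i * n0 + l * d)) \<in> sgrp_gen gens"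
proof (induction i arbitrary: l)
  case 0
  thus ?case by (simp add: pair_zero_in_sgrp_gen)
next
  case (Suc i)
  define m where "m = min l p"
  define l' where "l' = l - m"
  have m: "m \<le> p" "l = m + l'" "l' \<le> i * p"
    using Suc.prems by (auto simp: m_def l'_def)
  have "(n0 + m * d, N - (n0 + m * d)) \<in> sgrp_gen gens"
    using m(1) by (intro sgrp_gen.gen) (auto simp: gens_def)
  moreover have "(i * n0 + l' * d, i * N - (i * n0 + l' * d)) \<in> sgrp_gen gens"
    using Suc.IH[OF m(3)] .
  moreover have "(Suc i * n0 + l * d, Suc i * N - (Suc i * n0 + l * d)) =
      (n0 + m * d, N - (n0 + m * d)) + (i * n0 + l' * d, i * N - (i * n0 + l' * d))"
    using m level_bound[OF m(3)] by (simp add: N_def algebra_simps)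
  ultimately show ?case by (simp only: sgrp_gen.add)
qed

lemma sgrp_gen_gens: "sgrp_gen gens = S_arith"
proof
  show "sgrp_gen gens \<subseteq> S_arith"
  proof
    fix z assume "z \<in> sgrp_gen gens"
    thus "z \<in> S_arith"
    proof (induction rule: sgrp_gen.induct)
      case zero
      show ?case using u_axis_in_S_arith[of 0] by (simp add: zero_prod_def)
    next
      case (gen g)
      thus ?case using u_axis_in_S_arith[of 1] gen_in_S_arith by (auto simp: gens_def)
    qed (rule S_arith_add)
  qed
  show "S_arith \<subseteq> sgrp_gen gens"
  proof
    fix z assume "z \<in> S_arith"
    then obtain k i l where h: "i \<le> k" "l \<le> i * p" "fst z = i * n0 + l * d" "fst z + snd z = k * N"
      unfolding S_arith_def by auto
    have "(0, c * N) \<in> sgrp_gen gens" for c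
    proof (induction c)
      case (Suc c)
      have "(0, N) \<in> sgrp_gen gens" by (intro sgrp_gen.gen) (simp add: gens_def)
      from sgrp_gen.add[OF this Suc.IH] show ?case by simp
    qed (simp add: pair_zero_in_sgrp_gen)
    moreover have "z = (i * n0 + l * d, i * N - (i * n0 + l * d)) + (0, (k - i) * N)"
      using h level_bound[OF h(2)] mult_le_mono1[OF h(1), of N]
      by (simp add: prod_eq_iff diff_mult_distrib)
    ultimately show "z \<in> sgrp_gen gens"
      using sgrp_gen.add[OF level_point_in_sgrp_gen[OF h(2)]] by metis
  qed
qed

lemma int_pair_S_arith_iff:
  "v \<in> int_pair ` S_arith \<longleftrightarrow>
    (\<exists>k i l. i \<le> k \<and> l \<le> i * p \<and> fst v = int (i * n0 + l * d) \<and> fst v + snd v = int (k * N))"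
proof
  assume "v \<in> int_pair ` S_arith"
  then obtain x y where "(x, y) \<in> S_arith" and v: "v = (int x, int y)" by (auto simp: int_pair_def)
  then obtain k i l where "i \<le> k" "l \<le> i * p" "x = i * n0 + l * d" "x + y = k * N"
    unfolding S_arith_def by blast
  thus "\<exists>k i l. i \<le> k \<and> l \<le> i * p \<and> fst v = int (i * n0 + l * d) \<and> fst v + snd v = int (k * N)"
    unfolding v by (intro exI[of _ k] exI[of _ i] exI[of _ l]) (simp flip: of_nat_add)
next
  assume "\<exists>k i l. i \<le> k \<and> l \<le> i * p \<and> fst v = int (i * n0 + l * d) \<and> fst v + snd v = int (k * N)"
  then obtain k i l where h: "i \<le> k" "l \<le> i * p" "fst v = int (i * n0 + l * d)"
    "fst v + snd v = int (k * N)" by blast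
  have le: "i * n0 + l * d \<le> k * N"
    using level_bound[OF h(2)] mult_le_mono1[OF h(1), of N] by linarith
  have "v = int_pair (i * n0 + l * d, k * N - (i * n0 + l * d))"
    using h(3,4) le by (simp add: int_pair_def prod_eq_iff)
  moreover have "(i * n0 + l * d, k * N - (i * n0 + l * d)) \<in> S_arith"
    using h(1,2) le unfolding S_arith_def by auto
  ultimately show "v \<in> int_pair ` S_arith" by blast
qed

lemma int_pair_S_arithI:
  assumes "i \<le> k" "l \<le> i * p" "x = int (i * n0 + l * d)" "x + y = int (k * N)"
  shows "(x, y) \<in> int_pair ` S_arith"
  using assms by (auto simp: int_pair_S_arith_iff)

lemma int_pair_S_arithE:
  assumes "(x, y) \<in> int_pair ` S_arith"
  obtains k i l where "i \<le> k" "l \<le> i * p" "x = int (i * n0 + l * d)" "x + y = int (k * N)"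
  using assms by (auto simp: int_pair_S_arith_iff)

lemma gen_shift:
  "m \<le> p \<Longrightarrow> int_pair (n0 + m * d, N - (n0 + m * d)) + (w1, w2) =
    (int n0 + int m * int d + w1, int N - int n0 - int m * int d + w2)"
  by (simp add: int_pair_def N_def)

lemma t_admissible_S_arithI:
  assumes "\<And>m. m \<le> p \<Longrightarrow> int_pair (n0 + m * d, N - (n0 + m * d)) + w \<in> int_pair ` S_arith"
  shows "t_admissible S_arith w"
  unfolding sgrp_gen_gens[symmetric]
proof (rule t_admissible_sgrp_genI)
  fix g assume "g \<in> gens" "0 < fst g"
  then obtain m where "m \<le> p" "g = (n0 + m * d, N - (n0 + m * d))" by (auto simp: gens_def)
  thus "int_pair g + w \<in> int_pair ` sgrp_gen gens" unfolding sgrp_gen_gens using assms by simp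
qed

lemma u_admissible_S_arithI:
  assumes "int_pair (0, N) + w \<in> int_pair ` S_arith"
    and "\<And>m. m < p \<Longrightarrow> int_pair (n0 + m * d, N - (n0 + m * d)) + w \<in> int_pair ` S_arith"
  shows "u_admissible S_arith w"
  unfolding sgrp_gen_gens[symmetric]
proof (rule u_admissible_sgrp_genI)
  fix g assume "g \<in> gens" "0 < snd g"
  then consider "g = (0, N)" | m where "m < p" "g = (n0 + m * d, N - (n0 + m * d))"
    unfolding gens_def by (force simp: N_def)
  thus "int_pair g + w \<in> int_pair ` sgrp_gen gens" unfolding sgrp_gen_gens using assms by cases simp_all
qed

text \<open>If \<open>w + (N, 0)\<close> and \<open>w + (0, N)\<close> lie in \<open>S\<close>, so does \<open>w + g\<close> for every generator \<open>g\<close>: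
  write \<open>w + (0, N)\<close> at level \<open>k\<close> with \<open>i\<close> non-axis summands; if \<open>i < k\<close> one more summand
  fits, and if \<open>i = k\<close> the representation of \<open>w + (N, 0)\<close> at the same level provides room.\<close>

lemma gen_shift_in_S_arith_if_both_axes:
  assumes A: "int_pair (N, 0) + w \<in> int_pair ` S_arith"
    and B: "int_pair (0, N) + w \<in> int_pair ` S_arith" and m: "m \<le> p"
  shows "int_pair (n0 + m * d, N - (n0 + m * d)) + w \<in> int_pair ` S_arith"
proof -
  obtain w1 w2 where w: "w = (w1, w2)" by fastforce
  have "(w1, int N + w2) \<in> int_pair ` S_arith" using B by (simp add: w int_pair_plus_Pair)
  then obtain k i l where hB: "i \<le> k" "l \<le> i * p" "w1 = int (i * n0 + l * d)"
      "w1 + (int N + w2) = int (k * N)"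
    by (rule int_pair_S_arithE)
  show ?thesis
    unfolding w gen_shift[OF m]
  proof (cases "i < k")
    case True
    show "(int n0 + int m * int d + w1, int N - int n0 - int m * int d + w2) \<in> int_pair ` S_arith"
      using True hB m by (intro int_pair_S_arithI[of "i + 1" k "l + m"]) (auto simp: algebra_simps)
  next
    case False
    hence ik: "i = k" using hB(1) by simp
    have "(int N + w1, w2) \<in> int_pair ` S_arith" using A by (simp add: w int_pair_plus_Pair)
    then obtain k' i' l' where hA: "i' \<le> k'" "l' \<le> i' * p" "int N + w1 = int (i' * n0 + l' * d)"
        "int N + w1 + w2 = int (k' * N)"
      by (rule int_pair_S_arithE)
    have "k' * N = k * N" using hA(4) hB(4) by linarith
    hence kk: "k' = k" using N_pos by simp
    have "int ((i + 1) * n0 + (l + p) * d) = int (i' * n0 + l' * d)"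
      using hB(3) hA(3) by (simp add: N_def algebra_simps)
    hence eq: "(i + 1) * n0 + (l + p) * d = i' * n0 + l' * d" by (simp only: of_nat_eq_iff)
    have "\<not> (\<exists>t. i' = i + 1 + t * d \<and> l + p = l' + t * n0)" using hA(1) kk ik by auto
    then obtain t where t: "i + 1 = i' + t * d" "l' = l + p + t * n0"
      using representation_shift[OF eq] by blast
    have "(i + 1) * n0 = (i' + t * d) * n0" using t(1) by simp
    hence "n0 + m * d + (i * n0 + l * d) = i' * n0 + (l + m + t * n0) * d"
      by (simp add: algebra_simps)
    moreover have "int n0 + int m * int d + w1 = int (n0 + m * d + (i * n0 + l * d))"
      using hB(3) by simp
    ultimately have "int n0 + int m * int d + w1 = int (i' * n0 + (l + m + t * n0) * d)"
      by simp
    thus "(int n0 + int m * int d + w1, int N - int n0 - int m * int d + w2) \<in> int_pair ` S_arith"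
      using t(2) hA(1,2) hB(4) kk m by (intro int_pair_S_arithI[of i' k "l + m + t * n0"]) auto
  qed
qed

lemma admissible_if_both_axes:
  assumes "int_pair (N, 0) + w \<in> int_pair ` S_arith" "int_pair (0, N) + w \<in> int_pair ` S_arith"
  shows "t_admissible S_arith w \<and> u_admissible S_arith w"
  using assms by (auto intro!: t_admissible_S_arithI u_admissible_S_arithI gen_shift_in_S_arith_if_both_axes)

lemma int_pair_S_arith_min_level:
  assumes "v \<in> int_pair ` S_arith"
  obtains k i l where "i \<le> k" "l \<le> i * p" "fst v = int (i * n0 + l * d)" "fst v + snd v = int (k * N)"
    and "\<And>i' l'. i' < i \<Longrightarrow> l' \<le> i' * p \<Longrightarrow> fst v \<noteq> int (i' * n0 + l' * d)"
proof -
  define P where "P i \<longleftrightarrow> (\<exists>k l. i \<le> k \<and> l \<le> i * p \<and> fst v = int (i * n0 + l * d) \<and>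
    fst v + snd v = int (k * N))" for i
  obtain i where "P i" "\<And>i'. i' < i \<Longrightarrow> \<not> P i'"
    using assms exists_least_iff[of P] unfolding P_def int_pair_S_arith_iff by blast
  then obtain k l where h: "i \<le> k" "l \<le> i * p" "fst v = int (i * n0 + l * d)"
      "fst v + snd v = int (k * N)" and min: "\<And>i'. i' < i \<Longrightarrow> \<not> P i'"
    unfolding P_def by blast
  have "fst v \<noteq> int (i' * n0 + l' * d)" if "i' < i" "l' \<le> i' * p" for i' l'
  proof
    assume "fst v = int (i' * n0 + l' * d)"
    hence "P i'" unfolding P_def using that h by (intro exI[of _ k] exI[of _ l']) auto
    thus False using min[OF that(1)] by blast
  qed
  thus thesis using that h by blast
qed

text \<open>All admissible degrees outside \<open>S\<close> live at level \<open>j\<^sub>0 + d\<close>.\<close>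

definition j0 :: nat where
  "j0 = (LEAST j. n0 \<le> j * p + 1)"

lemma j0_bounds: "n0 \<le> j0 * p + 1" "j0 * p + 1 < n0 + p" "0 < j0"
proof -
  have "n0 * 1 \<le> n0 * p" using p_ge_2 by (intro mult_le_mono2) simp
  hence "n0 \<le> n0 * p + 1" by linarith
  thus lower: "n0 \<le> j0 * p + 1" unfolding j0_def by (rule LeastI)
  show "0 < j0" using lower p_ge_2 p_less_n0 by (cases j0) auto
  then obtain j where j: "j0 = Suc j" using gr0_implies_Suc by blast
  hence "\<not> n0 \<le> j * p + 1" unfolding j0_def using not_less_Least[of j] by (metis lessI)
  thus "j0 * p + 1 < n0 + p" using j by simp
qed

lemma j0_le: "n0 \<le> j * p + 1 \<Longrightarrow> j0 \<le> j"
  unfolding j0_def by (rule Least_le)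

definition t_offsets :: "nat set" where
  "t_offsets = {l. j0 * p < l + n0 \<and> l < p}"

lemma exceptional_level_iff:
  "(l < p \<and> d \<le> i \<and> n0 \<le> (i - d) * p + 1 \<and> (i - d) * p < l + n0) \<longleftrightarrow> i = j0 + d \<and> l \<in> t_offsets"
proof
  assume h: "l < p \<and> d \<le> i \<and> n0 \<le> (i - d) * p + 1 \<and> (i - d) * p < l + n0"
  have "j0 \<le> i - d" using h j0_le by blast
  moreover have "\<not> j0 + 1 \<le> i - d"
  proof
    assume "j0 + 1 \<le> i - d"
    hence "(j0 + 1) * p \<le> (i - d) * p" by (rule mult_le_mono1)
    thus False using h j0_bounds(1) by simp
  qed
  ultimately have "i - d = j0" by simp
  thus "i = j0 + d \<and> l \<in> t_offsets" using h by (auto simp: t_offsets_def)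
qed (use j0_bounds in \<open>auto simp: t_offsets_def\<close>)

lemma below_min_level:
  assumes min: "\<And>i' l'. i' < i \<Longrightarrow> l' \<le> i' * p \<Longrightarrow> x \<noteq> int (i' * n0 + l' * d)"
    and x: "x = int (i * n0 + l * d)" and di: "d \<le> i"
  shows "(i - d) * p < l + n0"
proof (rule ccontr)
  assume "\<not> (i - d) * p < l + n0"
  moreover have "i * n0 + l * d = (i - d) * n0 + (l + n0) * d"
    using di by (simp add: algebra_simps diff_mult_distrib)
  moreover have "i - d < i" using di d_pos by simp
  ultimately show False using min[of "i - d" "l + n0"] x by simp
qed

lemma t_level_drop:
  assumes "i * n0 = i2 * n0 + (l2 + 1) * d" and "l2 \<le> i2 * p"
  shows "d \<le> i" and "n0 \<le> (i - d) * p + 1"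
proof -
  have "i * n0 + 0 * d = i2 * n0 + (l2 + 1) * d" using assms(1) by simp
  then obtain t where t: "i = i2 + t * d" "l2 + 1 = t * n0" using representation_shift by fastforce
  have "1 \<le> t" using t(2) by (cases t) auto
  hence "d \<le> t * d" and n0t: "n0 \<le> t * n0" using mult_le_mono1[of 1 t] by auto
  hence di: "d \<le> i" and i2: "i2 \<le> i - d" using t(1) by linarith+
  show "d \<le> i" by (rule di)
  show "n0 \<le> (i - d) * p + 1" using assms(2) t(2) mult_le_mono1[OF i2, of p] n0t by linarith
qed

lemma t_admissible_outside_S_arith:
  assumes adm: "t_admissible S_arith w" and notin: "w \<notin> int_pair ` S_arith"
  shows "\<exists>k l. j0 + d \<le> k \<and> l \<in> t_offsets \<and> fst w + int N = int ((j0 + d) * n0 + l * d) \<and>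
    fst w + snd w + int N = int (k * N)"
proof -
  obtain w1 w2 where w: "w = (w1, w2)" by fastforce
  have gen: "int_pair (n0 + m * d, N - (n0 + m * d)) + w \<in> int_pair ` S_arith" if "m \<le> p" for m
    using adm gen_in_S_arith[OF that] p_less_n0 unfolding t_admissible_def by simp
  have "(int N + w1, w2) \<in> int_pair ` S_arith"
    using gen[of p] by (simp add: w int_pair_plus_Pair N_def)
  then obtain k i l where h: "i \<le> k" "l \<le> i * p" "int N + w1 = int (i * n0 + l * d)"
      "int N + w1 + w2 = int (k * N)"
    and min: "\<And>i' l'. i' < i \<Longrightarrow> l' \<le> i' * p \<Longrightarrow> int N + w1 \<noteq> int (i' * n0 + l' * d)"
    by (rule int_pair_S_arith_min_level) auto
  have lp: "l < p"
  proof (rule ccontr)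
    assume "\<not> l < p"
    then obtain i1 k1 l1 where "i = Suc i1" "k = Suc k1" "l = p + l1"
      using h(1,2) p_ge_2 le_Suc_ex by (cases i; cases k) force+
    hence "w \<in> int_pair ` S_arith"
      using h by (auto simp: w N_def algebra_simps intro!: int_pair_S_arithI[of i1 k1 l1])
    thus False using notin by contradiction
  qed
  define m where "m = p - l - 1"
  have "(int n0 + int m * int d + w1, int N - int n0 - int m * int d + w2) \<in> int_pair ` S_arith"
    using gen[of m] gen_shift[of m] by (simp add: m_def w)
  then obtain k2 i2 l2 :: nat where h2: "i2 \<le> k2" "l2 \<le> i2 * p"
      "int n0 + int m * int d + w1 = int (i2 * n0 + l2 * d)"
    by (rule int_pair_S_arithE)
  have "int (i * n0 + l * d) + int n0 + int m * int d = int N + int (i2 * n0 + l2 * d)"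
    using h(3) h2(3) by linarith
  hence "i * n0 + l * d + n0 + m * d = N + (i2 * n0 + l2 * d)"
    by (simp only: of_nat_add[symmetric] of_nat_mult[symmetric] of_nat_eq_iff)
  hence "i * n0 + (l + m + 1) * d = i2 * n0 + (l2 + 1) * d + p * d" by (simp add: N_def algebra_simps)
  moreover have "l + m + 1 = p" using lp by (simp add: m_def)
  ultimately have "i * n0 + p * d = i2 * n0 + (l2 + 1) * d + p * d" by (simp only:)
  hence drop: "i * n0 = i2 * n0 + (l2 + 1) * d" by simp
  have "d \<le> i" "n0 \<le> (i - d) * p + 1" using t_level_drop[OF drop h2(2)] by auto
  moreover have "(i - d) * p < l + n0" using min h(3) \<open>d \<le> i\<close> by (rule below_min_level)
  ultimately have "i = j0 + d" "l \<in> t_offsets" using exceptional_level_iff[of l i] lp by auto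
  thus ?thesis using h w by (intro exI[of _ k] exI[of _ l]) auto
qed

text \<open>\<open>t_degree (tgen l) + (N, 0)\<close> is the point of level \<open>j\<^sub>0 + d\<close> with first coordinate
  \<open>(j\<^sub>0 + d) n\<^sub>0 + l d\<close>; these are the degrees of the minimal \<open>\<partial>/\<partial>t\<close>-generators besides \<open>t \<partial>/\<partial>t\<close>.\<close>

definition tgen :: "nat \<Rightarrow> nat \<times> nat" where
  "tgen l = ((j0 + d) * n0 + l * d + 1 - N, ((j0 + d) * p - l) * d)"

lemma tgen_facts:
  assumes "l \<in> t_offsets"
  shows "N < (j0 + d) * n0 + l * d" and "l \<le> (j0 + d) * p" and "2 \<le> fst (tgen l)"
    and "fst (tgen l) + snd (tgen l) = (j0 + d - 1) * N + 1"
proof -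
  have "(d + 1) * n0 \<le> (j0 + d) * n0" using j0_bounds(3) by (intro mult_le_mono1) simp
  moreover have "p * d < n0 * d" using p_less_n0 d_pos by simp
  hence "N < (d + 1) * n0" by (simp add: N_def algebra_simps)
  ultimately show gt: "N < (j0 + d) * n0 + l * d" by linarith
  thus "2 \<le> fst (tgen l)" by (simp add: tgen_def)
  have "l < p" "p \<le> (j0 + d) * p" using assms j0_bounds(3) by (auto simp: t_offsets_def)
  thus lp: "l \<le> (j0 + d) * p" by linarith
  hence "(j0 + d) * N = (j0 + d) * n0 + l * d + ((j0 + d) * p - l) * d" by (rule level_split)
  thus "fst (tgen l) + snd (tgen l) = (j0 + d - 1) * N + 1"
    using gt by (simp add: tgen_def diff_mult_distrib)
qed

lemma t_degree_tgen:
  "l \<in> t_offsets \<Longrightarrow>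
    t_degree (tgen l) = (int ((j0 + d) * n0 + l * d) - int N, int (((j0 + d) * p - l) * d))"
  using tgen_facts(1)[of l] by (simp add: t_degree_def tgen_def)

lemma t_admissible_tgen:
  assumes l: "l \<in> t_offsets"
  shows "t_admissible S_arith (t_degree (tgen l))"
proof (rule t_admissible_S_arithI)
  fix m assume m: "m \<le> p"
  define x where "x = (j0 + d) * n0 + l * d"
  define \<beta> where "\<beta> = ((j0 + d) * p - l) * d"
  have tot: "int x + int \<beta> = int ((j0 + d) * N)"
    using arg_cong[OF level_split[OF tgen_facts(2)[OF l]], of int] by (simp add: x_def \<beta>_def)
  have deg: "t_degree (tgen l) = (int x - int N, int \<beta>)"
    using t_degree_tgen[OF l] by (simp add: x_def \<beta>_def)
  have level: "int_pair (n0 + m * d, N - (n0 + m * d)) + t_degree (tgen l) \<in> int_pair ` S_arith"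
    if eq: "n0 + m * d + x = N + (i * n0 + l' * d)" and "i \<le> j0 + d" "l' \<le> i * p" for i l'
  proof -
    have "int n0 + int m * int d + int x = int N + int (i * n0 + l' * d)"
      using arg_cong[OF eq, of int] by simp
    thus ?thesis unfolding deg gen_shift[OF m]
      using that tot by (intro int_pair_S_arithI[of i "j0 + d" l']) auto
  qed
  show "int_pair (n0 + m * d, N - (n0 + m * d)) + t_degree (tgen l) \<in> int_pair ` S_arith"
  proof (cases "p \<le> l + m")
    case True
    then obtain e where e: "l + m = p + e" using le_Suc_ex by blast
    have "n0 + m * d + x = N + ((j0 + d) * n0 + e * d)"
      using arg_cong[OF e, of "\<lambda>z. z * d"] by (simp add: x_def N_def algebra_simps)
    moreover have "e \<le> (j0 + d) * p" using e m tgen_facts(2)[OF l] by linarith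
    ultimately show ?thesis by (intro level) auto
  next
    case False
    define e where "e = p - (l + m + 1)"
    have pe: "p = l + m + 1 + e" and en0: "e + 1 \<le> n0" using False p_less_n0 by (auto simp: e_def)
    have "n0 + m * d + x = N + (j0 * n0 + (n0 - 1 - e) * d)"
    proof -
      obtain f where f: "n0 = e + 1 + f" using en0 le_Suc_ex by blast
      show ?thesis unfolding x_def N_def unfolding pe f by (simp add: algebra_simps)
    qed
    moreover have "n0 - 1 - e \<le> j0 * p" using j0_bounds(1) by linarith
    ultimately show ?thesis by (intro level) auto
  qed
qed

lemma below_tgen_not_in_S_arith:
  assumes l: "l \<in> t_offsets" and S: "(x, y) \<in> S_arith"
  shows "x + N \<noteq> (j0 + d) * n0 + l * d"
proof
  assume x: "x + N = (j0 + d) * n0 + l * d"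
  from S obtain k' i' l' where h: "i' \<le> k'" "l' \<le> i' * p" "x = i' * n0 + l' * d"
    unfolding S_arith_def by blast
  have "(j0 + d) * n0 + l * d = (i' + 1) * n0 + (l' + p) * d"
    using x h(3) by (simp add: N_def algebra_simps)
  moreover have "l < p" "j0 * p < l + n0" using l by (auto simp: t_offsets_def)
  ultimately obtain t where t: "j0 + d = i' + 1 + t * d" "l' + p = l + t * n0"
    using representation_shift by fastforce
  obtain t1 where "t = Suc t1" using t(2) \<open>l < p\<close> h(2) by (cases t) auto
  hence "(i' + 1) * p \<le> j0 * p" and "n0 \<le> t * n0" using t(1) by auto
  moreover have "(i' + 1) * p = i' * p + p" by simp
  ultimately show False using t(2) h(2) \<open>j0 * p < l + n0\<close> by linarith
qed

definition T_exps :: "(nat \<times> nat) set" where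
  "T_exps = insert (1, 0) (tgen ` t_offsets)"

lemma t_degree_one_zero: "t_degree (1, 0) = 0"
  by (simp add: t_degree_def zero_prod_def)

lemma T_exps_admissible: "e \<in> T_exps \<Longrightarrow> t_admissible S_arith (t_degree e)"
  unfolding T_exps_def using t_admissible_tgen
  by (auto simp: t_admissible_def t_degree_one_zero simp del: One_nat_def)

lemma T_exps_covers:
  assumes "t_admissible S_arith w"
  shows "\<exists>e\<in>T_exps. \<exists>\<sigma>\<in>S_arith. w = t_degree e + int_pair \<sigma>"
proof (cases "w \<in> int_pair ` S_arith")
  case True
  then obtain \<sigma> where "\<sigma> \<in> S_arith" "w = t_degree (1, 0) + int_pair \<sigma>"
    by (auto simp: t_degree_one_zero simp del: One_nat_def)
  thus ?thesis by (auto simp: T_exps_def simp del: One_nat_def)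
next
  case False
  then obtain k l where h: "j0 + d \<le> k" "l \<in> t_offsets"
      "fst w + int N = int ((j0 + d) * n0 + l * d)" "fst w + snd w + int N = int (k * N)"
    using t_admissible_outside_S_arith[OF assms] by blast
  define \<beta> where "\<beta> = ((j0 + d) * p - l) * d"
  have "int ((j0 + d) * n0 + l * d) + int \<beta> = int ((j0 + d) * N)"
    using arg_cong[OF level_split[OF tgen_facts(2)[OF h(2)]], of int] by (simp add: \<beta>_def)
  moreover have "int ((k - (j0 + d)) * N) = int (k * N) - int ((j0 + d) * N)"
    using h(1) by (simp add: diff_mult_distrib)
  ultimately have "w = t_degree (tgen l) + int_pair (0, (k - (j0 + d)) * N)"
    using h(3,4) by (simp add: t_degree_tgen[OF h(2)] int_pair_def prod_eq_iff \<beta>_def[symmetric])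
  thus ?thesis using h(2) u_axis_in_S_arith by (auto simp: T_exps_def)
qed

lemma T_exps_antichain:
  assumes e: "e \<in> T_exps" and e': "e' \<in> T_exps" and \<sigma>: "\<sigma> \<in> S_arith" and eq: "e' + \<sigma> = e"
  shows "\<sigma> = 0"
proof -
  from e e' consider "e = (1, 0)" "e' = (1, 0)"
    | l where "l \<in> t_offsets" "e = tgen l" "e' = (1, 0)"
    | l' where "e = (1, 0)" "l' \<in> t_offsets" "e' = tgen l'"
    | l l' where "l \<in> t_offsets" "e = tgen l" "l' \<in> t_offsets" "e' = tgen l'"
    unfolding T_exps_def by blast
  thus ?thesis
  proof cases
    case (2 l)
    have "(fst \<sigma>, snd \<sigma>) \<in> S_arith" using \<sigma> by simp
    moreover have "fst \<sigma> + N = (j0 + d) * n0 + l * d"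
      using eq 2 tgen_facts(1)[OF 2(1)] by (auto simp: tgen_def prod_eq_iff)
    ultimately show ?thesis using below_tgen_not_in_S_arith[OF 2(1)] by blast
  next
    case (3 l')
    thus ?thesis using eq tgen_facts(3)[OF 3(2)] by (auto simp: prod_eq_iff)
  next
    case (4 l l')
    thus ?thesis using eq tgen_facts(4)[OF 4(1)] tgen_facts(4)[OF 4(3)] by (auto simp: prod_eq_iff)
  qed (use eq in \<open>auto simp: prod_eq_iff\<close>)
qed

lemma u_level_drop:
  assumes eq: "(i + 1) * n0 + (l + (p - 1)) * d = i3 * n0 + l3 * d" and "i3 \<le> i" and "l3 \<le> i3 * p"
  shows "d \<le> i" and "l + n0 \<le> (i - d) * p + 1"
proof -
  have "\<not> (\<exists>t. i3 = i + 1 + t * d \<and> l + (p - 1) = l3 + t * n0)" using assms(2) by auto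
  then obtain t where t: "i + 1 = i3 + t * d" "l3 = l + (p - 1) + t * n0"
    using representation_shift[OF eq] by blast
  have "1 \<le> t" using t(1) assms(2) by (cases t) auto
  hence "d \<le> t * d" "n0 \<le> t * n0" using mult_le_mono1[of 1 t] by auto
  hence "i3 \<le> i + 1 - d" "d \<le> i + 1" using t(1) by linarith+
  hence le: "l + (p - 1) + n0 \<le> (i + 1 - d) * p"
    using assms(3) t(2) mult_le_mono1[of i3 "i + 1 - d" p] \<open>n0 \<le> t * n0\<close> by linarith
  show di: "d \<le> i"
  proof (rule ccontr)
    assume "\<not> d \<le> i"
    hence "i + 1 - d = 0" using \<open>d \<le> i + 1\<close> by simp
    thus False using le p_less_n0 by simp
  qed
  hence "(i + 1 - d) * p = (i - d) * p + p" by (simp add: Suc_diff_le)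
  thus "l + n0 \<le> (i - d) * p + 1" using le p_ge_2 by linarith
qed

lemma u_admissible_outside_S_arith:
  assumes adm: "u_admissible S_arith w" and notin: "w \<notin> int_pair ` S_arith"
  shows "\<exists>i l. d \<le> i \<and> l + n0 = (i - d) * p + 1 \<and> fst w = int (i * n0 + l * d) \<and>
    fst w + snd w + int N = int (i * N)"
proof -
  obtain w1 w2 where w: "w = (w1, w2)" by fastforce
  have gen: "int_pair g + w \<in> int_pair ` S_arith" if "g \<in> S_arith" "0 < snd g" for g
    using adm that unfolding u_admissible_def by blast
  have "(w1, int N + w2) \<in> int_pair ` S_arith"
    using gen[OF u_axis_in_S_arith[of 1]] N_pos by (simp add: w int_pair_plus_Pair)
  then obtain k i l where h: "i \<le> k" "l \<le> i * p" "w1 = int (i * n0 + l * d)"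
      "w1 + (int N + w2) = int (k * N)"
    and min: "\<And>i' l'. i' < i \<Longrightarrow> l' \<le> i' * p \<Longrightarrow> w1 \<noteq> int (i' * n0 + l' * d)"
    by (rule int_pair_S_arith_min_level) auto
  have ik: "i = k"
  proof (rule ccontr)
    assume "i \<noteq> k"
    then obtain k1 where "k = Suc k1" "i \<le> k1" using h(1) by (cases k) auto
    hence "w \<in> int_pair ` S_arith"
      using h by (auto simp: w algebra_simps intro!: int_pair_S_arithI[of i k1 l])
    thus False using notin by contradiction
  qed
  define p1 where "p1 = p - 1"
  have "p = Suc p1" using p_ge_2 by (simp add: p1_def)
  hence "N - (n0 + p1 * d) = d" "0 < d" using d_pos unfolding N_def by simp_all
  hence "(int n0 + int p1 * int d + w1, int N - int n0 - int p1 * int d + w2) \<in> int_pair ` S_arith"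
    using gen[OF gen_in_S_arith[of p1]] gen_shift[of p1] by (simp add: w p1_def)
  then obtain k3 i3 l3 where h3: "i3 \<le> k3" "l3 \<le> i3 * p"
      "int n0 + int p1 * int d + w1 = int (i3 * n0 + l3 * d)"
      "int n0 + int p1 * int d + w1 + (int N - int n0 - int p1 * int d + w2) = int (k3 * N)"
    by (rule int_pair_S_arithE)
  have "k3 * N = k * N" using h(4) h3(4) by linarith
  hence k3: "k3 = i" using N_pos ik by simp
  have "int ((i + 1) * n0 + (l + p1) * d) = int (i3 * n0 + l3 * d)"
    using h(3) h3(3) by (simp add: algebra_simps)
  hence "(i + 1) * n0 + (l + (p - 1)) * d = i3 * n0 + l3 * d" by (simp only: of_nat_eq_iff p1_def)
  from u_level_drop[OF this] h3(1,2) k3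
  have "d \<le> i" "l + n0 \<le> (i - d) * p + 1" by auto
  moreover have "(i - d) * p < l + n0" using min h(3) \<open>d \<le> i\<close> by (rule below_min_level)
  moreover have "fst w + snd w + int N = int (i * N)" using h(4) ik w by simp
  ultimately show ?thesis using h(3) w by (intro exI[of _ i] exI[of _ l]) auto
qed

definition U_exps :: "(nat \<times> nat) set" where
  "U_exps = {(0, 1), (j0 * N + d, (d - 1) * (N - 1))}"

lemma ugen_fst: "j0 * N + d = (j0 + d) * n0 + (j0 * p + 1 - n0) * d"
proof -
  obtain f where f: "j0 * p + 1 = n0 + f" using j0_bounds(1) le_Suc_ex by blast
  have "(j0 + d) * n0 + (j0 * p + 1 - n0) * d = j0 * n0 + d * (n0 + f)"
    using f by (simp add: algebra_simps)
  also have "\<dots> = j0 * n0 + d * (j0 * p + 1)" using f by simp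
  also have "\<dots> = j0 * N + d" by (simp add: N_def algebra_simps)
  finally show ?thesis by simp
qed

lemma ugen_sum: "j0 * N + d + (d - 1) * (N - 1) = (j0 + d - 1) * N + 1"
proof -
  obtain d1 N1 where "d = Suc d1" "N = Suc N1" using d_pos N_pos gr0_implies_Suc by blast
  thus ?thesis by (simp add: algebra_simps)
qed

lemma ugen_level:
  "int (j0 * N + d) + (int ((d - 1) * (N - 1)) - 1) = int ((j0 + d - 1) * N)"
  "int ((j0 + d) * N) = int ((j0 + d - 1) * N) + int N"
proof -
  show "int (j0 * N + d) + (int ((d - 1) * (N - 1)) - 1) = int ((j0 + d - 1) * N)"
    using arg_cong[OF ugen_sum, of int] by simp
  have "j0 + d = Suc (j0 + d - 1)" using d_pos by simp
  thus "int ((j0 + d) * N) = int ((j0 + d - 1) * N) + int N"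
    by (metis add.commute mult_Suc of_nat_add)
qed

lemma u_admissible_ugen: "u_admissible S_arith (u_degree (j0 * N + d, (d - 1) * (N - 1)))"
proof (rule u_admissible_S_arithI)
  have deg: "u_degree (j0 * N + d, (d - 1) * (N - 1)) = (int (j0 * N + d), int ((d - 1) * (N - 1)) - 1)"
    by (simp add: u_degree_def)
  have "(int (j0 * N + d), int N + (int ((d - 1) * (N - 1)) - 1)) \<in> int_pair ` S_arith"
  proof (rule int_pair_S_arithI[of "j0 + d" "j0 + d" "j0 * p + 1 - n0"])
    show "j0 * p + 1 - n0 \<le> (j0 + d) * p" using p_less_n0 add_mult_distrib[of j0 d p] by linarith
    show "int (j0 * N + d) = int ((j0 + d) * n0 + (j0 * p + 1 - n0) * d)" using ugen_fst by simp
    show "int (j0 * N + d) + (int N + (int ((d - 1) * (N - 1)) - 1)) = int ((j0 + d) * N)"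
      using ugen_level by linarith
  qed simp
  thus "int_pair (0, N) + u_degree (j0 * N + d, (d - 1) * (N - 1)) \<in> int_pair ` S_arith"
    unfolding deg int_pair_plus_Pair by simp
  fix m assume m: "m < p"
  have "(int n0 + int m * int d + int (j0 * N + d),
      int N - int n0 - int m * int d + (int ((d - 1) * (N - 1)) - 1)) \<in> int_pair ` S_arith"
  proof (rule int_pair_S_arithI[of "j0 + 1" "j0 + d" "j0 * p + m + 1"])
    show "j0 + 1 \<le> j0 + d" "j0 * p + m + 1 \<le> (j0 + 1) * p" using d_pos m by simp_all
    have "n0 + m * d + (j0 * N + d) = (j0 + 1) * n0 + (j0 * p + m + 1) * d"
      by (simp add: N_def algebra_simps)
    thus "int n0 + int m * int d + int (j0 * N + d) = int ((j0 + 1) * n0 + (j0 * p + m + 1) * d)"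
      by (metis of_nat_add of_nat_mult)
    show "int n0 + int m * int d + int (j0 * N + d) +
        (int N - int n0 - int m * int d + (int ((d - 1) * (N - 1)) - 1)) = int ((j0 + d) * N)"
      using ugen_level by linarith
  qed
  thus "int_pair (n0 + m * d, N - (n0 + m * d)) + u_degree (j0 * N + d, (d - 1) * (N - 1))
      \<in> int_pair ` S_arith"
    unfolding deg gen_shift[OF less_imp_le[OF m]] .
qed

lemma below_ugen_not_in_S_arith:
  assumes S: "(j0 * N + d, y) \<in> S_arith"
  shows "j0 * N + d + y \<noteq> (j0 + d - 1) * N"
proof
  assume level: "j0 * N + d + y = (j0 + d - 1) * N"
  from S obtain k i l where h: "i \<le> k" "l \<le> i * p" "j0 * N + d = i * n0 + l * d" "j0 * N + d + y = k * N"
    unfolding S_arith_def by blast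
  have "k = j0 + d - 1" using h(4) level N_pos by simp
  hence ik: "i < j0 + d" using h(1) d_pos by linarith
  have "(j0 + d) * n0 + (j0 * p + 1 - n0) * d = i * n0 + l * d" using h(3) ugen_fst by simp
  moreover have "\<not> (\<exists>t. i = j0 + d + t * d \<and> j0 * p + 1 - n0 = l + t * n0)" using ik by auto
  ultimately obtain t where t: "j0 + d = i + t * d" "l = j0 * p + 1 - n0 + t * n0"
    using representation_shift by blast
  have "1 \<le> t" using t(1) ik by (cases t) auto
  hence "d \<le> t * d" and n0t: "n0 \<le> t * n0" using mult_le_mono1[of 1 t] by auto
  hence "i \<le> j0" using t(1) by linarith
  hence "i * p \<le> j0 * p" by (rule mult_le_mono1)
  thus False using h(2) t(2) n0t j0_bounds(1) by linarith
qed

lemma u_degree_zero_one: "u_degree (0, 1) = 0"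
  by (simp add: u_degree_def zero_prod_def)

lemma U_exps_admissible: "e \<in> U_exps \<Longrightarrow> u_admissible S_arith (u_degree e)"
  unfolding U_exps_def using u_admissible_ugen
  by (auto simp: u_admissible_def u_degree_zero_one simp del: One_nat_def)

lemma U_exps_covers:
  assumes "u_admissible S_arith w"
  shows "\<exists>e\<in>U_exps. \<exists>\<sigma>\<in>S_arith. w = u_degree e + int_pair \<sigma>"
proof (cases "w \<in> int_pair ` S_arith")
  case True
  then obtain \<sigma> where "\<sigma> \<in> S_arith" "w = u_degree (0, 1) + int_pair \<sigma>"
    by (auto simp: u_degree_zero_one simp del: One_nat_def)
  thus ?thesis by (auto simp: U_exps_def simp del: One_nat_def)
next
  case False
  then obtain i l where h: "d \<le> i" "l + n0 = (i - d) * p + 1" "fst w = int (i * n0 + l * d)"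
      "fst w + snd w + int N = int (i * N)"
    using u_admissible_outside_S_arith[OF assms] by blast
  have "j0 \<le> i - d" using h(2) j0_le by simp
  then obtain q where q: "i = d + j0 + q" using h(1) le_Suc_ex by (metis add.assoc le_add_diff_inverse)
  have "i * n0 + l * d = (j0 + q) * N + d"
  proof -
    have "(l + n0) * d = ((j0 + q) * p + 1) * d" using h(2) q by simp
    thus ?thesis using q by (simp add: N_def algebra_simps)
  qed
  hence fst_w: "fst w = int (j0 * N + d) + int (q * N)" using h(3) by (simp add: algebra_simps)
  have "int (i * N) = int ((j0 + d) * N) + int (q * N)" using q by (simp add: algebra_simps)
  hence "snd w = int ((d - 1) * (N - 1)) - 1" using h(4) fst_w ugen_level by linarith
  hence "w = u_degree (j0 * N + d, (d - 1) * (N - 1)) + int_pair (q * N, 0)"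
    using fst_w by (simp add: u_degree_def int_pair_def prod_eq_iff)
  thus ?thesis using t_axis_in_S_arith by (auto simp: U_exps_def)
qed

lemma U_exps_antichain:
  assumes e: "e \<in> U_exps" and e': "e' \<in> U_exps" and \<sigma>: "\<sigma> \<in> S_arith" and eq: "e' + \<sigma> = e"
  shows "\<sigma> = 0"
proof (cases "e = e'")
  case False
  have "0 < j0 * N + d" using d_pos by simp
  moreover have False if "e = (j0 * N + d, (d - 1) * (N - 1))" "e' = (0, 1)"
  proof -
    have "\<sigma> = (j0 * N + d, snd \<sigma>)" and B: "1 + snd \<sigma> = (d - 1) * (N - 1)"
      using eq that by (auto simp: prod_eq_iff)
    hence "(j0 * N + d, snd \<sigma>) \<in> S_arith" using \<sigma> by simp
    moreover have "int (j0 * N + d) + int (snd \<sigma>) = int ((j0 + d - 1) * N)"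
      using ugen_level(1) arg_cong[OF B, of int] by linarith
    hence "j0 * N + d + snd \<sigma> = (j0 + d - 1) * N"
      by (simp only: of_nat_add[symmetric] of_nat_eq_iff)
    ultimately show False using below_ugen_not_in_S_arith by blast
  qed
  ultimately show ?thesis using e e' eq False by (auto simp: U_exps_def prod_eq_iff)
qed (use eq in \<open>auto simp: prod_eq_iff\<close>)

theorem minimally_generates_S_arith:
  "minimally_generates_Der S_arith (monomial_fields T_exps U_exps :: ('k::field_char_0 pol2 \<Rightarrow> _) set)"
proof -
  interpret monomial_derivation_basis S_arith N T_exps U_exps
  proof
    show "0 \<in> S_arith" using u_axis_in_S_arith[of 0] by (simp add: zero_prod_def)
    show "(N, 0) \<in> S_arith" "(0, N) \<in> S_arith"
      using t_axis_in_S_arith[of 1] u_axis_in_S_arith[of 1] by simp_all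
    show "finite T_exps" by (simp add: T_exps_def t_offsets_def)
    show "finite U_exps" by (simp add: U_exps_def)
  qed (fact S_arith_add N_pos admissible_if_both_axes T_exps_admissible U_exps_admissible
      T_exps_covers U_exps_covers T_exps_antichain U_exps_antichain)+
  show ?thesis by (rule minimally_generates_monomial_fields)
qed

section \<open>The three cases\<close>

lemma j0_eqI: "n0 \<le> j * p + 1 \<Longrightarrow> j * p + 1 < n0 + p \<Longrightarrow> j0 = j"
proof -
  assume lower: "n0 \<le> j * p + 1" and upper: "j * p + 1 < n0 + p"
  have "j * p < (j0 + 1) * p" using upper j0_bounds(1) by simp
  hence "j \<le> j0" by (metis Suc_eq_plus1 less_Suc_eq_le mult_less_cancel2)
  thus ?thesis using j0_le[OF lower] by simp
qed

lemma monomial_fields_T_U_exps: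
  "monomial_fields T_exps U_exps = {vf_u 0 1, vf_u (j0 * N + d) ((d - 1) * (N - 1)), vf_t 1 0}
    \<union> (\<lambda>(x, y). vf_t x y) ` tgen ` t_offsets"
  by (auto simp: monomial_fields_def T_exps_def U_exps_def)

lemma minimally_generates_reindexed:
  assumes "j0 = j" and "t_offsets = h ` {i. P i}" and "\<And>i. P i \<Longrightarrow> tgen (h i) = (F i, G i)"
  shows "minimally_generates_Der S_arith
    ({vf_u 0 1, vf_u (j * N + d) ((d - 1) * (N - 1)), vf_t 1 0} \<union> {vf_t (F i) (G i) | i. P i}
     :: ('k::field_char_0 pol2 \<Rightarrow> _) set)"
proof -
  have eq: "{vf_t (F i) (G i) | i. P i} = (\<lambda>(x, y). vf_t x y) ` tgen ` t_offsets"
    using assms(2,3) by (auto simp: image_iff)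
  show ?thesis
    using minimally_generates_S_arith[where 'k = 'k]
    unfolding monomial_fields_T_U_exps assms(1) eq[symmetric] .
qed

text \<open>Cases \<open>b = 0\<close> and \<open>b = 1\<close> of the theorem: then \<open>j\<^sub>0 = a\<close> and \<open>tgen l\<close> is the exponent
  indexed by \<open>i = l + b\<close>.\<close>

lemma minimally_generates_small_remainder:
  assumes n0: "n0 = a * p + b" and b: "b \<le> 1"
  shows "minimally_generates_Der S_arith
    ({vf_u 0 1, vf_u (a * N + d) ((d - 1) * (N - 1)), vf_t 1 0}
     \<union> {vf_t (a * N + 1 - (n0 + (p - i) * d)) (d * (N - i)) | i. 1 \<le> i \<and> i \<le> p - 1 + b}
     :: ('k::field_char_0 pol2 \<Rightarrow> _) set)"
proof (rule minimally_generates_reindexed[where h = "\<lambda>i. i - b"])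
  show j0: "j0 = a" using n0 b p_ge_2 by (intro j0_eqI) auto
  have offsets: "l \<in> t_offsets \<longleftrightarrow> 1 \<le> l + b \<and> l + b \<le> p - 1 + b" for l
    unfolding t_offsets_def mem_Collect_eq j0 using n0 b p_ge_2 by auto
  show "t_offsets = (\<lambda>i. i - b) ` {i. 1 \<le> i \<and> i \<le> p - 1 + b}"
  proof (intro set_eqI iffI)
    fix l assume "l \<in> t_offsets"
    thus "l \<in> (\<lambda>i. i - b) ` {i. 1 \<le> i \<and> i \<le> p - 1 + b}"
      unfolding offsets by (intro image_eqI[of _ _ "l + b"]) auto
  qed (use b in \<open>auto simp: offsets\<close>)
  fix i assume i: "1 \<le> i \<and> i \<le> p - 1 + b"
  define l where "l = i - b"
  have l: "l \<in> t_offsets" "i = l + b" using i b by (auto simp: offsets l_def)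
  have "1 \<le> a" using n0 b p_less_n0 p_ge_2 by (cases a) auto
  hence "N \<le> a * N" by simp
  moreover have "n0 + (p - i) * d \<le> N" by (simp add: N_def)
  ultimately have "n0 + (p - i) * d \<le> a * N + 1" by linarith
  moreover have "N \<le> (j0 + d) * n0 + l * d + 1" using tgen_facts(1)[OF l(1)] by simp
  moreover have "l + b \<le> p" using i l(2) b p_ge_2 by linarith
  then obtain r where pr: "p = l + b + r" using le_Suc_ex by blast
  hence "(j0 + d) * n0 + l * d + 1 + (n0 + (p - i) * d) = a * N + 1 + N"
    unfolding j0 N_def l(2) unfolding n0 by (simp add: algebra_simps)
  ultimately have "(j0 + d) * n0 + l * d + 1 - N = a * N + 1 - (n0 + (p - i) * d)"
    by linarith
  moreover have "((j0 + d) * p - l) * d = d * (N - i)"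
    unfolding j0 N_def l(2) unfolding n0 by (simp add: algebra_simps)
  ultimately show "tgen (i - b) = (a * N + 1 - (n0 + (p - i) * d), d * (N - i))"
    by (simp add: tgen_def l_def)
qed

text \<open>Case \<open>b \<ge> 2\<close>: then \<open>j\<^sub>0 = a + 1\<close> and \<open>tgen l\<close> is indexed by \<open>i = l - (p - b)\<close>.\<close>

lemma minimally_generates_large_remainder:
  assumes n0: "n0 = a * p + b" and b: "2 \<le> b" "b < p"
  shows "minimally_generates_Der S_arith
    ({vf_u 0 1, vf_u ((a + 1) * N + d) ((d - 1) * (N - 1)), vf_t 1 0}
     \<union> {vf_t (a * N + i * d + 1) (d * (N - i)) | i. 1 \<le> i \<and> i \<le> b - 1}
     :: ('k::field_char_0 pol2 \<Rightarrow> _) set)"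
proof (rule minimally_generates_reindexed[where h = "\<lambda>i. p - b + i"])
  show j0: "j0 = a + 1" using n0 b by (intro j0_eqI) auto
  show "t_offsets = (\<lambda>i. p - b + i) ` {i. 1 \<le> i \<and> i \<le> b - 1}"
  proof (intro set_eqI iffI)
    fix l assume "l \<in> t_offsets"
    hence "j0 * p < l + n0" "l < p" by (simp_all add: t_offsets_def)
    hence "p - b < l" "l < p" using n0 j0 b by auto
    thus "l \<in> (\<lambda>i. p - b + i) ` {i. 1 \<le> i \<and> i \<le> b - 1}"
      by (intro image_eqI[of _ _ "l - (p - b)"]) auto
  qed (unfold t_offsets_def j0, use n0 b in auto)
  fix i assume i: "1 \<le> i \<and> i \<le> b - 1"
  obtain c where pc: "p = b + c + 1" using b(2) less_imp_Suc_add by fastforce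
  have "p - b + i = c + 1 + i" using pc by simp
  moreover have "(j0 + d) * n0 + (c + 1 + i) * d + 1 = a * N + i * d + 1 + N"
    unfolding j0 N_def unfolding n0 pc by (simp add: algebra_simps)
  moreover have "(j0 + d) * p - (c + 1 + i) = N - i" using i
    unfolding j0 N_def unfolding n0 pc by (simp add: algebra_simps)
  ultimately show "tgen (p - b + i) = (a * N + i * d + 1, d * (N - i))"
    by (simp add: tgen_def mult.commute)
qed

end

lemma multiple_in_sgrp_gen: "(g::nat) \<in> G \<Longrightarrow> k * g \<in> sgrp_gen G"
  by (induction k) (auto intro: sgrp_gen.zero[simplified] sgrp_gen.add sgrp_gen.gen)

lemma coprime_of_Gcd_arith_seq:
  assumes n: "\<And>i. n i = n0 + i * d" and Gcd: "Gcd (n ` {0..p}) = (1::nat)"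
  shows "coprime n0 d"
proof -
  have "gcd n0 d dvd Gcd (n ` {0..p})" using n by (auto intro!: Gcd_greatest)
  thus ?thesis using Gcd by (simp add: coprime_iff_gcd_eq_1)
qed

text \<open>Minimality of \<open>n\<^sub>0, \<dots>, n\<^sub>p\<close> forces \<open>p < n\<^sub>0\<close>: otherwise \<open>n\<^bsub>n\<^sub>0\<^esub> = (d + 1) n\<^sub>0\<close> is a
  multiple of \<open>n\<^sub>0\<close>.\<close>

lemma less_of_minimal_arith_seq:
  assumes n: "\<And>i. n i = n0 + i * d" and n0: "0 < n0"
    and minimal: "\<forall>i\<in>{0..p}. n i \<notin> sgrp_gen (n ` ({0..p} - {i}))"
  shows "p < (n0::nat)"
proof (rule ccontr)
  assume "\<not> p < n0"
  hence "n0 \<in> {0..p}" by simp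
  moreover have "Suc d * n 0 \<in> sgrp_gen (n ` ({0..p} - {n0}))"
    using n0 by (intro multiple_in_sgrp_gen) auto
  moreover have "Suc d * n 0 = n n0" using n by (simp add: algebra_simps)
  ultimately show False using minimal by auto
qed

theorem theorem4p5:
  fixes n :: "nat \<Rightarrow> nat" and n0 d p a b :: nat and S :: "(nat \<times> nat) set"
  assumes "p \<ge> 2" and "n0 > 0" and "d > 0"
    and n_def: "\<And>i. n i = n0 + i * d"
    and "Gcd (n ` {0..p}) = 1"
    and "\<forall>i\<in>{0..p}. n i \<notin> sgrp_gen (n ` ({0..p} - {i}))"
    and S_def: "S = sgrp_gen ({(0, n p)} \<union> {(n i, n p - n i) | i. i \<le> p})"
    and a_def: "a = n0 div p" and b_def: "b = n0 mod p"
  shows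
    "(b = 0 \<longrightarrow> minimally_generates_Der S
        ({vf_u 0 1, vf_u (a * n p + d) ((d - 1) * (n p - 1)), vf_t 1 0}
         \<union> {vf_t (a * n p + 1 - n (p - i)) (d * (n p - i)) | i. 1 \<le> i \<and> i \<le> p - 1}
         :: ('k::field_char_0 pol2 \<Rightarrow> 'k pol2) set))
   \<and> (b = 1 \<longrightarrow> minimally_generates_Der S
        ({vf_u 0 1, vf_u (a * n p + d) ((d - 1) * (n p - 1)), vf_t 1 0}
         \<union> {vf_t (a * n p + 1 - n (p - i)) (d * (n p - i)) | i. 1 \<le> i \<and> i \<le> p}
         :: ('k::field_char_0 pol2 \<Rightarrow> 'k pol2) set))
   \<and> (b \<noteq> 0 \<and> b \<noteq> 1 \<longrightarrow> minimally_generates_Der S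
        ({vf_u 0 1, vf_u ((a + 1) * n p + d) ((d - 1) * (n p - 1)), vf_t 1 0}
         \<union> {vf_t (a * n p + i * d + 1) (d * (n p - i)) | i. 1 \<le> i \<and> i \<le> b - 1}
         :: ('k::field_char_0 pol2 \<Rightarrow> 'k pol2) set))"
proof -
  interpret arithmetic_semigroup n0 d p
    using assms coprime_of_Gcd_arith_seq less_of_minimal_arith_seq by unfold_locales blast+
  have np: "n p = N" using n_def by (simp add: N_def)
  have S: "S = S_arith"
    unfolding S_def np sgrp_gen_gens[symmetric] gens_def by (simp add: n_def)
  have n0: "n0 = a * p + b" and b_less: "b < p" using a_def b_def p_ge_2 by simp_all
  show ?thesis
    unfolding S np unfolding n_def
    using minimally_generates_small_remainder[of a 0] minimally_generates_small_remainder[of a 1]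
      minimally_generates_large_remainder[of a b] n0 b_less p_ge_2
    by auto
qed

end
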